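(* Assume the Setting, let $\tau>1$ and $\mu_0>0$ satisfy $1-\frac{1+\eta}{\tau}-\eta-\frac{\mu_0}{4\sigma}>0$, and let $\beta<\infty$. Let $y^{\delta_l}$ be noisy data with $\|y^{\delta_l}-y\|\le\delta_l$, $0<\delta_l\to0$, and let $\xi_n^{\delta_l},x_n^{\delta_l}$, $0\le n\le n_{\delta_l}$, be generated by Algorithm 1 with data $y^{\delta_l}$ (with stopping index $n_{\delta_l}$). Let $(\xi_n,x_n)$ be generated by Algorithm 2 with the same $\xi_0$, $\beta$, $\mu_0$, $\mu_1$ and the same step-size rule. Then for every finite integer $\hat n\le\liminf_{l\to\infty}n_{\delta_l}$ one has $\xi_n^{\delta_l}\to\xi_n$ and $x_n^{\delta_l}\to x_n$ as $l\to\infty$ for all $0\le n\le\hat n$.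
   Context: Setting. Let $X,Y$ be real Hilbert spaces. Let $\mathcal R:X\to(-\infty,\infty]$ be proper, lower semicontinuous and strongly convex with constant $\sigma>0$, i.e. $\mathcal R(t\bar x+(1-t)x)+\sigma t(1-t)\|\bar x-x\|^2\le t\mathcal R(\bar x)+(1-t)\mathcal R(x)$ for all $\bar x,x\in\mathrm{dom}(\mathcal R)$ and $t\in[0,1]$. For $\xi\in\partial\mathcal R(x)$ (subdifferential) the Bregman distance is $D_{\mathcal R}^{\xi}(z,x)=\mathcal R(z)-\mathcal R(x)-\langle\xi,z-x\rangle$. The convex conjugate $\mathcal R^*$ is differentiable with $\|\nabla\mathcal R^*(\bar\xi)-\nabla\mathcal R^*(\xi)\|\le\|\bar\xi-\xi\|/(2\sigma)$, and $\nabla\mathcal R^*(\xi)=\arg\min_{x\in X}\{\mathcal R(x)-\langle\xi,x\rangle\}$ (unique minimizer), with $\xi\in\partial\mathcal R(\nabla\mathcal R^*(\xi))$. Let $F:\mathrm{dom}(F)\subset X\to Y$ and $y\in Y$. Assume: (b) there are $\rho>0$, $x_0\in X$, $\xi_0\in\partial\mathcal R(x_0)$ with $B_{2\rho}(x_0):=\{x:\|x-x_0\|\le 2\rho\}\subset\mathrm{dom}(F)$, and $F(x)=y$ has a solution $\bar x$ with $D_{\mathcal R}^{\xi_0}(\bar x,x_0)\le\sigma\rho^2$; (c) $F$ is weakly closed: if $x_n\in\mathrm{dom}(F)$, $x_n\rightharpoonup x$ and $F(x_n)\to v$, then $x\in\mathrm{dom}(F)$ and $F(x)=v$; (d) there are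 bounded linear operators $L(x):X\to Y$, $x\in B_{2\rho}(x_0)$, with $x\mapsto L(x)$ continuous on $B_{2\rho}(x_0)$, a constant $\eta\in[0,1)$ with $\|F(x)-F(\bar x)-L(\bar x)(x-\bar x)\|\le\eta\|F(x)-F(\bar x)\|$ for all $x,\bar x\in B_{2\rho}(x_0)$, and a constant $L>0$ with $\|L(x)\|\le L$ on $B_{2\rho}(x_0)$. Algorithm 1 (noisy data $y^\delta$ with $\|y^\delta-y\|\le\delta$, $\delta>0$). Parameters: $\tau>1$, $\beta\in(0,\infty]$, $\mu_0>0$, $\mu_1>0$, and a fixed choice of one of two step-size rules: (constant) $\alpha_n^\delta=\mu_0/L^2$, or (adaptive) $\alpha_n^\delta=\min\{\mu_0\|r_n^\delta\|^2/\|g_n^\delta\|^2,\mu_1\}$ (with $\mu_0\|r_n^\delta\|^2/\|g_n^\delta\|^2:=+\infty$ if $g_n^\delta=0$). Set $\xi_{-1}^\delta=\xi_0^\delta=\xi_0$, $x_0^\delta=x_0=\nabla\mathcal R^*(\xi_0)$. For $n\ge0$: (i) $r_n^\delta:=F(x_n^\delta)-y^\delta$; if $\|r_n^\delta\|\le\tau\delta$, stop and output $x_n^\delta$ (the stopping index is denoted $n_\delta$; it is finite under the hypotheses of the claim). (ii) $g_n^\delta:=L(x_n^\delta)^*r_n^\delta$ and $\alpha_n^\delta$ by the chosen rule. (iii) $m_n^\delta:=\xi_n^\delta-\xi_{n-1}^\delta$; $\tilde\gamma_0^\delta:=0$ and for $n\ge1$, $\tilde\gamma_n^\delta:=\langle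 m_n^\delta,x_n^\delta-x_{n-1}^\delta\rangle-(1-\eta)\alpha_{n-1}^\delta\|r_{n-1}^\delta\|^2+(1+\eta)\alpha_{n-1}^\delta\delta\|r_{n-1}^\delta\|+\beta_{n-1}^\delta\tilde\gamma_{n-1}^\delta$. (iv) $\beta_n^\delta:=\min\{\max\{0,(\alpha_n^\delta\langle g_n^\delta,m_n^\delta\rangle-2\sigma\tilde\gamma_n^\delta)/\|m_n^\delta\|^2\},\beta\}$ if $m_n^\delta\ne0$, and $\beta_n^\delta:=0$ if $m_n^\delta=0$. (v) $\xi_{n+1}^\delta:=\xi_n^\delta-\alpha_n^\delta g_n^\delta+\beta_n^\delta m_n^\delta$, $x_{n+1}^\delta:=\nabla\mathcal R^*(\xi_{n+1}^\delta)$. Algorithm 2 (exact data $y$). Same parameters $\beta,\mu_0,\mu_1$ and same step-size rule type: (constant) $\alpha_n=\mu_0/L^2$, or (adaptive) $\alpha_n=\min\{\mu_0\|r_n\|^2/\|g_n\|^2,\mu_1\}$ if $r_n\ne0$ and $\alpha_n=0$ if $r_n=0$. Set $\xi_{-1}=\xi_0$, $x_0=\nabla\mathcal R^*(\xi_0)$. For all $n\ge0$ (no stopping): $r_n:=F(x_n)-y$, $g_n:=L(x_n)^*r_n$, $\alpha_n$ by the rule; $m_n:=\xi_n-\xi_{n-1}$; $\tilde\gamma_0:=0$ and for $n\ge1$, $\tilde\gamma_n:=\langle m_n,x_n-x_{n-1}\rangle-(1-\eta)\alpha_{n-1}\|r_{n-1}\|^2+\beta_{n-1}\tilde\gamma_{n-1}$;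 $\beta_n:=\min\{\max\{0,(\alpha_n\langle g_n,m_n\rangle-2\sigma\tilde\gamma_n)/\|m_n\|^2\},\beta\}$ if $m_n\ne0$ and $\beta_n:=0$ if $m_n=0$; $\xi_{n+1}:=\xi_n-\alpha_ng_n+\beta_nm_n$, $x_{n+1}:=\nabla\mathcal R^*(\xi_{n+1})$. *)

theory Defs
  imports "HOL-Analysis.Analysis"
begin

definition proper_fun :: "('a \<Rightarrow> ereal) \<Rightarrow> bool" where
  "proper_fun R \<longleftrightarrow> (\<forall>x. R x \<noteq> -\<infinity>) \<and> (\<exists>x. R x \<noteq> \<infinity>)"

definition lsc_fun :: "('a::topological_space \<Rightarrow> ereal) \<Rightarrow> bool" where
  "lsc_fun R \<longleftrightarrow> (\<forall>c. closed {x. R x \<le> c})"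

definition effdom :: "('a \<Rightarrow> ereal) \<Rightarrow> 'a set" where
  "effdom R = {x. R x < \<infinity>}"

definition strongly_convex_fun :: "('a::real_normed_vector \<Rightarrow> ereal) \<Rightarrow> real \<Rightarrow> bool" where
  "strongly_convex_fun R \<sigma> \<longleftrightarrow>
     (\<forall>xb\<in>effdom R. \<forall>x\<in>effdom R. \<forall>t\<in>{0..1::real}.
        R (t *\<^sub>R xb + (1 - t) *\<^sub>R x) + ereal (\<sigma> * t * (1 - t) * (norm (xb - x))\<^sup>2)
          \<le> ereal t * R xb + ereal (1 - t) * R x)"

definition subdiff :: "('a::real_inner \<Rightarrow> ereal) \<Rightarrow> 'a \<Rightarrow> 'a set" where
  "subdiff R x = {\<xi>. R x \<noteq> \<infinity> \<and> R x \<noteq> -\<infinity> \<and>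
                     (\<forall>z. R x + ereal (inner \<xi> (z - x)) \<le> R z)}"

definition bregman :: "('a::real_inner \<Rightarrow> ereal) \<Rightarrow> 'a \<Rightarrow> 'a \<Rightarrow> 'a \<Rightarrow> ereal" where
  "bregman R \<xi> z x = R z - R x - ereal (inner \<xi> (z - x))"

definition grad_conj :: "('a::real_inner \<Rightarrow> ereal) \<Rightarrow> 'a \<Rightarrow> 'a" where
  "grad_conj R \<xi> = (THE x. \<forall>z. R x - ereal (inner \<xi> x) \<le> R z - ereal (inner \<xi> z))"

definition weak_conv :: "(nat \<Rightarrow> 'a::real_inner) \<Rightarrow> 'a \<Rightarrow> bool" where
  "weak_conv X x \<longleftrightarrow> (\<forall>z. ((\<lambda>n. inner (X n) z) \<longlongrightarrow> inner x z) sequentially)"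

section \<open>The iteration (Algorithm 1 for delta > 0, Algorithm 2 for delta = 0)\<close>

text \<open>Parameters: R, F, Ladj (Ladj x = adjoint of L(x)), eta, sigma, Lc (the bound L),
  adaptive (True = adaptive step-size rule, False = constant rule), mu0, mu1, beta,
  delta, data yd, starting xi0.
  The state at index n is (xi_n, xi_{n-1}, gamma~_n); x_n = grad_conj R xi_n.\<close>

definition residual where
  "residual R F yd \<xi> = F (grad_conj R \<xi>) - yd"

definition stepsize :: "bool \<Rightarrow> real \<Rightarrow> real \<Rightarrow> real \<Rightarrow> 'b::real_normed_vector \<Rightarrow> 'a::real_normed_vector \<Rightarrow> real" where
  "stepsize adaptive Lc \<mu>0 \<mu>1 r g =
     (if adaptive then
        (if r = 0 then 0
         else if g = 0 then \<mu>1
         else min (\<mu>0 * (norm r)\<^sup>2 / (norm g)\<^sup>2) \<mu>1)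
      else \<mu>0 / Lc\<^sup>2)"

primrec iter ::
  "('a::real_inner \<Rightarrow> ereal) \<Rightarrow> ('a \<Rightarrow> 'b::real_inner) \<Rightarrow> ('a \<Rightarrow> 'b \<Rightarrow> 'a) \<Rightarrow>
   real \<Rightarrow> real \<Rightarrow> real \<Rightarrow> bool \<Rightarrow> real \<Rightarrow> real \<Rightarrow> real \<Rightarrow> real \<Rightarrow> 'b \<Rightarrow> 'a \<Rightarrow> nat \<Rightarrow> 'a \<times> 'a \<times> real"
where
  "iter R F Ladj \<eta> \<sigma> Lc adaptive \<mu>0 \<mu>1 \<beta> \<delta> yd \<xi>0 0 = (\<xi>0, \<xi>0, 0)"
| "iter R F Ladj \<eta> \<sigma> Lc adaptive \<mu>0 \<mu>1 \<beta> \<delta> yd \<xi>0 (Suc n) =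
     (let (\<xi>, \<xi>p, \<gamma>) = iter R F Ladj \<eta> \<sigma> Lc adaptive \<mu>0 \<mu>1 \<beta> \<delta> yd \<xi>0 n;
          x = grad_conj R \<xi>;
          r = F x - yd;
          g = Ladj x r;
          \<alpha> = stepsize adaptive Lc \<mu>0 \<mu>1 r g;
          m = \<xi> - \<xi>p;
          \<beta>n = (if m = 0 then 0
                 else min (max 0 ((\<alpha> * inner g m - 2 * \<sigma> * \<gamma>) / (norm m)\<^sup>2)) \<beta>);
          \<xi>' = \<xi> - \<alpha> *\<^sub>R g + \<beta>n *\<^sub>R m;
          \<gamma>' = inner (\<xi>' - \<xi>) (grad_conj R \<xi>' - x) - (1 - \<eta>) * \<alpha> * (norm r)\<^sup>2
               + (1 + \<eta>) * \<alpha> * \<delta> * norm r + \<beta>n * \<gamma>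
      in (\<xi>', \<xi>, \<gamma>'))"

definition xi_seq where
  "xi_seq R F Ladj \<eta> \<sigma> Lc adaptive \<mu>0 \<mu>1 \<beta> \<delta> yd \<xi>0 n =
     fst (iter R F Ladj \<eta> \<sigma> Lc adaptive \<mu>0 \<mu>1 \<beta> \<delta> yd \<xi>0 n)"

definition x_seq where
  "x_seq R F Ladj \<eta> \<sigma> Lc adaptive \<mu>0 \<mu>1 \<beta> \<delta> yd \<xi>0 n =
     grad_conj R (xi_seq R F Ladj \<eta> \<sigma> Lc adaptive \<mu>0 \<mu>1 \<beta> \<delta> yd \<xi>0 n)"

definition stop_index where
  "stop_index R F Ladj \<eta> \<sigma> Lc adaptive \<mu>0 \<mu>1 \<beta> \<tau> \<delta> yd \<xi>0 =
     (let P = (\<lambda>n. norm (F (x_seq R F Ladj \<eta> \<sigma> Lc adaptive \<mu>0 \<mu>1 \<beta> \<delta> yd \<xi>0 n) - yd) \<le> \<tau> * \<delta>)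
      in if (\<exists>n. P n) then enat (LEAST n. P n) else \<infinity>)"

end

theory Submission
  imports Defs
begin

text \<open>
  Induction on \<open>n\<close>: the exact iteration is the limit of the noisy ones step by step.
  Strong convexity makes \<open>\<nabla>R\<^sup>*\<close> Lipschitz with constant \<open>1/(2\<sigma>)\<close>, so convergence of \<open>\<xi>\<^sub>n\<close> carries
  over to \<open>x\<^sub>n\<close>. Before the discrepancy principle stops, the tangential cone condition together with
  the choice of the momentum coefficient makes the Bregman distance to the solution \<open>xbar\<close> decrease, so all
  noisy iterates stay in \<open>B\<^sub>2\<^sub>\<rho>(x\<^sub>0)\<close>, where \<open>F\<close>, \<open>L\<close> and the adjoints depend continuously on
  \<open>x\<close>. The only discontinuities are those of the adaptive step size at a vanishing residual and of
  the momentum coefficient at a vanishing momentum; there the products \<open>\<alpha>\<^sub>n g\<^sub>n\<close>, \<open>\<alpha>\<^sub>n \<parallel>r\<^sub>n\<parallel>\<^sup>2\<close>,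
  \<open>\<beta>\<^sub>n m\<^sub>n\<close>, \<open>\<beta>\<^sub>n \<gamma>\<^sub>n\<close> still converge, because the coefficients are bounded and the other factor
  tends to zero (for \<open>\<beta>\<^sub>n \<gamma>\<^sub>n\<close> because the exact iteration has \<open>\<gamma>\<^sub>n = 0\<close> whenever \<open>m\<^sub>n = 0\<close>).
\<close>

lemma tendsto_norm_diff_zero:
  fixes f :: "nat \<Rightarrow> 'a::real_normed_vector"
  shows "f \<longlonglongrightarrow> c \<Longrightarrow> (\<lambda>l. norm (f l - c)) \<longlonglongrightarrow> 0"
  by (simp add: tendsto_norm_zero_iff LIM_zero_iff)

lemma tendsto_norm_diff_bound:
  fixes f :: "nat \<Rightarrow> 'a::real_normed_vector"
  assumes "eventually (\<lambda>l. norm (f l - c) \<le> g l) sequentially" and "g \<longlonglongrightarrow> 0"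
  shows "f \<longlonglongrightarrow> c"
  using Lim_null_comparison[OF assms] by (simp add: LIM_zero_iff)

lemma bounded_scaleR_tendsto_zero:
  fixes f :: "nat \<Rightarrow> 'a::real_normed_vector"
  assumes "\<And>l. \<bar>a l\<bar> \<le> C" and "f \<longlonglongrightarrow> 0"
  shows "(\<lambda>l. a l *\<^sub>R f l) \<longlonglongrightarrow> 0"
proof (rule tendsto_norm_diff_bound)
  have "norm (a l *\<^sub>R f l - 0) \<le> C * norm (f l)" for l
    using mult_right_mono[OF assms(1) norm_ge_zero] by simp
  then show "eventually (\<lambda>l. norm (a l *\<^sub>R f l - 0) \<le> C * norm (f l)) sequentially"
    by (simp add: always_eventually)
  show "(\<lambda>l. C * norm (f l)) \<longlonglongrightarrow> 0" using tendsto_mult_right_zero[OF tendsto_norm_zero[OF assms(2)]] .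
qed

section \<open>Strongly convex functions and the gradient of the conjugate\<close>

lemma young_ineq:
  fixes a b s :: real
  assumes "s > 0"
  shows "a * b \<le> a\<^sup>2 / (4 * s) + s * b\<^sup>2"
proof -
  have "0 \<le> (a - 2 * s * b)\<^sup>2" by simp
  then have "4 * s * (a * b) \<le> a\<^sup>2 + 4 * s * (s * b\<^sup>2)"
    by (simp add: power2_eq_square algebra_simps)
  then show ?thesis using assms by (simp add: field_simps)
qed

locale strongly_convex_setting =
  fixes R :: "'a::{real_inner,complete_space} \<Rightarrow> ereal" and \<sigma> :: real and x0 \<xi>0 :: 'a
  assumes R_proper: "proper_fun R" and R_lsc: "lsc_fun R"
    and sigma_pos: "\<sigma> > 0" and R_strongly_convex: "strongly_convex_fun R \<sigma>"
    and xi0_subdiff: "\<xi>0 \<in> subdiff R x0"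
begin

definition Rval :: "'a \<Rightarrow> real" where "Rval x = real_of_ereal (R x)"

lemma R_not_minf: "R x \<noteq> -\<infinity>"
  using R_proper unfolding proper_fun_def by auto

lemma R_eq_Rval: "x \<in> effdom R \<Longrightarrow> R x = ereal (Rval x)"
  using R_not_minf[of x] unfolding effdom_def Rval_def by (cases "R x") auto

lemma effdomI: "R x \<le> ereal c \<Longrightarrow> x \<in> effdom R"
  unfolding effdom_def by (cases "R x") auto

lemma R_outside_effdom: "x \<notin> effdom R \<Longrightarrow> R x = \<infinity>"
  unfolding effdom_def by (simp add: top.not_eq_extremum)

lemma strongly_convex_Rval:
  assumes "x \<in> effdom R" "z \<in> effdom R" "0 \<le> t" "t \<le> 1"
  shows "t *\<^sub>R z + (1 - t) *\<^sub>R x \<in> effdom R"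
    and "Rval (t *\<^sub>R z + (1 - t) *\<^sub>R x) + \<sigma> * t * (1 - t) * (norm (z - x))\<^sup>2 \<le> t * Rval z + (1 - t) * Rval x"
proof -
  let ?w = "t *\<^sub>R z + (1 - t) *\<^sub>R x"
  have "R ?w + ereal (\<sigma> * t * (1 - t) * (norm (z - x))\<^sup>2) \<le> ereal t * R z + ereal (1 - t) * R x"
    using R_strongly_convex assms unfolding strongly_convex_fun_def by auto
  also have "\<dots> = ereal (t * Rval z + (1 - t) * Rval x)"
    using R_eq_Rval[OF assms(1)] R_eq_Rval[OF assms(2)] by simp
  finally have sc: "R ?w + ereal (\<sigma> * t * (1 - t) * (norm (z - x))\<^sup>2) \<le> ereal (t * Rval z + (1 - t) * Rval x)" .
  then have "R ?w \<le> ereal (t * Rval z + (1 - t) * Rval x - \<sigma> * t * (1 - t) * (norm (z - x))\<^sup>2)"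
    using R_not_minf[of ?w] by (cases "R ?w") auto
  then show w: "?w \<in> effdom R" by (rule effdomI)
  show "Rval ?w + \<sigma> * t * (1 - t) * (norm (z - x))\<^sup>2 \<le> t * Rval z + (1 - t) * Rval x"
    using sc R_eq_Rval[OF w] by simp
qed

lemma subdiff_iff_Rval:
  "\<xi> \<in> subdiff R x \<longleftrightarrow> x \<in> effdom R \<and> (\<forall>z\<in>effdom R. Rval x + inner \<xi> (z - x) \<le> Rval z)"
proof
  assume sub: "\<xi> \<in> subdiff R x"
  then have x: "x \<in> effdom R" unfolding subdiff_def effdom_def by (auto simp: less_top)
  moreover have "Rval x + inner \<xi> (z - x) \<le> Rval z" if "z \<in> effdom R" for z
  proof -
    have "R x + ereal (inner \<xi> (z - x)) \<le> R z" using sub unfolding subdiff_def by blast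
    then show ?thesis using R_eq_Rval[OF x] R_eq_Rval[OF that] by simp
  qed
  ultimately show "x \<in> effdom R \<and> (\<forall>z\<in>effdom R. Rval x + inner \<xi> (z - x) \<le> Rval z)" by blast
next
  assume asm: "x \<in> effdom R \<and> (\<forall>z\<in>effdom R. Rval x + inner \<xi> (z - x) \<le> Rval z)"
  have "R x + ereal (inner \<xi> (z - x)) \<le> R z" for z
    using asm R_eq_Rval[of x] R_eq_Rval[of z] R_outside_effdom[of z] by (cases "z \<in> effdom R") auto
  then show "\<xi> \<in> subdiff R x"
    unfolding subdiff_def using asm R_eq_Rval[of x] by auto
qed

lemma x0_effdom: "x0 \<in> effdom R"
  using xi0_subdiff subdiff_iff_Rval by blast

lemma subgradient_strong_ineq:
  assumes "\<xi> \<in> subdiff R x" "z \<in> effdom R"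
  shows "Rval x + inner \<xi> (z - x) + \<sigma> * (norm (z - x))\<^sup>2 \<le> Rval z"
proof (rule ccontr)
  assume neg: "\<not> ?thesis"
  define K where "K = Rval z - Rval x - inner \<xi> (z - x)"
  define d where "d = \<sigma> * (norm (z - x))\<^sup>2"
  have Kd: "K < d" using neg unfolding K_def d_def by linarith
  have x: "x \<in> effdom R" and sub: "\<And>w. w \<in> effdom R \<Longrightarrow> Rval x + inner \<xi> (w - x) \<le> Rval w"
    using assms(1) subdiff_iff_Rval by auto
  have "0 \<le> K" using sub[OF assms(2)] unfolding K_def by linarith
  with Kd have d_pos: "d > 0" by linarith
  \<comment> \<open>Move from x towards z by a step t small enough that the quadratic term beats the defect d - K.\<close>
  define t where "t = min 1 ((d - K) / (2 * d))"
  have t: "0 < t" "t \<le> 1" unfolding t_def using Kd d_pos by auto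
  have "t * (2 * d) \<le> d - K" using d_pos unfolding t_def by (simp add: min_def le_divide_eq)
  then have t_small: "t * d \<le> (d - K) / 2" by simp
  define w where "w = t *\<^sub>R z + (1 - t) *\<^sub>R x"
  have w: "w \<in> effdom R" "Rval w + \<sigma> * t * (1 - t) * (norm (z - x))\<^sup>2 \<le> t * Rval z + (1 - t) * Rval x"
    using strongly_convex_Rval[OF x assms(2)] t unfolding w_def by auto
  have "w - x = t *\<^sub>R (z - x)" unfolding w_def by (simp add: algebra_simps)
  then have "Rval x + t * inner \<xi> (z - x) \<le> Rval w" using sub[OF w(1)] by simp
  with w(2) have "t * (inner \<xi> (z - x) + d - t * d) \<le> t * (Rval z - Rval x)"
    unfolding d_def by (simp add: algebra_simps)
  then have "inner \<xi> (z - x) + d - t * d \<le> Rval z - Rval x" using t by simp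
  then have "d - K \<le> t * d" unfolding K_def by simp
  then have "d - K \<le> (d - K) / 2" using t_small by linarith
  then show False using Kd by simp
qed

definition Breg :: "'a \<Rightarrow> 'a \<Rightarrow> 'a \<Rightarrow> real" where
  "Breg \<xi> z x = Rval z - Rval x - inner \<xi> (z - x)"

lemma Breg_ge: "\<xi> \<in> subdiff R x \<Longrightarrow> z \<in> effdom R \<Longrightarrow> \<sigma> * (norm (z - x))\<^sup>2 \<le> Breg \<xi> z x"
  using subgradient_strong_ineq[of \<xi> x z] unfolding Breg_def by linarith

lemma bregman_le_ereal:
  assumes "\<xi> \<in> subdiff R x" "bregman R \<xi> z x \<le> ereal c"
  shows "z \<in> effdom R" and "Breg \<xi> z x \<le> c"
proof -
  have "R z - ereal (Rval x) - ereal (inner \<xi> (z - x)) \<le> ereal c"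
    using assms R_eq_Rval subdiff_iff_Rval unfolding bregman_def by metis
  then have "R z \<le> ereal (c + Rval x + inner \<xi> (z - x))"
    using R_not_minf[of z] by (cases "R z") auto
  then show z: "z \<in> effdom R" by (rule effdomI)
  show "Breg \<xi> z x \<le> c"
    using \<open>R z \<le> _\<close> R_eq_Rval[OF z] unfolding Breg_def by simp
qed

end

context strongly_convex_setting
begin

definition tilted :: "'a \<Rightarrow> 'a \<Rightarrow> real" where
  "tilted \<xi> z = Rval z - inner \<xi> z"

lemma midpoint_tilted_ineq:
  assumes "a \<in> effdom R" "b \<in> effdom R"
  shows "(1/2) *\<^sub>R a + (1/2) *\<^sub>R b \<in> effdom R"
    and "2 * tilted \<xi> ((1/2) *\<^sub>R a + (1/2) *\<^sub>R b) + \<sigma> / 2 * (norm (a - b))\<^sup>2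
         \<le> tilted \<xi> a + tilted \<xi> b"
proof -
  show "(1/2) *\<^sub>R a + (1/2) *\<^sub>R b \<in> effdom R"
    using strongly_convex_Rval(1)[OF assms(2,1), of "1/2"] by simp
  have "Rval ((1/2) *\<^sub>R a + (1/2) *\<^sub>R b) + \<sigma> * (1/2) * (1 - 1/2) * (norm (a - b))\<^sup>2
          \<le> (1/2) * Rval a + (1 - 1/2) * Rval b"
    using strongly_convex_Rval(2)[OF assms(2,1), of "1/2"] by simp
  moreover have "inner \<xi> ((1/2) *\<^sub>R a + (1/2) *\<^sub>R b) = (inner \<xi> a + inner \<xi> b) / 2"
    by (simp add: inner_add_right)
  ultimately show "2 * tilted \<xi> ((1/2) *\<^sub>R a + (1/2) *\<^sub>R b) + \<sigma> / 2 * (norm (a - b))\<^sup>2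
         \<le> tilted \<xi> a + tilted \<xi> b"
    unfolding tilted_def by (simp add: field_simps)
qed

lemma tilted_bounded_below:
  assumes "z \<in> effdom R"
  shows "tilted \<xi> x0 - (norm (\<xi>0 - \<xi>))\<^sup>2 / (4 * \<sigma>) \<le> tilted \<xi> z"
proof -
  have "Rval x0 + inner \<xi>0 (z - x0) + \<sigma> * (norm (z - x0))\<^sup>2 \<le> Rval z"
    using subgradient_strong_ineq[OF xi0_subdiff assms] .
  moreover have "- (norm (\<xi>0 - \<xi>) * norm (z - x0)) \<le> inner (\<xi>0 - \<xi>) (z - x0)"
    using Cauchy_Schwarz_ineq2[of "\<xi>0 - \<xi>" "z - x0"] by (simp add: abs_le_iff)
  moreover have "norm (\<xi>0 - \<xi>) * norm (z - x0) \<le> (norm (\<xi>0 - \<xi>))\<^sup>2 / (4 * \<sigma>) + \<sigma> * (norm (z - x0))\<^sup>2"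
    using young_ineq[OF sigma_pos] .
  moreover have "inner (\<xi>0 - \<xi>) (z - x0) = inner \<xi>0 (z - x0) - inner \<xi> z + inner \<xi> x0"
    by (simp add: inner_diff_left inner_diff_right)
  ultimately show ?thesis unfolding tilted_def by linarith
qed

definition is_tilted_min :: "'a \<Rightarrow> 'a \<Rightarrow> bool" where
  "is_tilted_min \<xi> x \<longleftrightarrow> (\<forall>z. R x - ereal (inner \<xi> x) \<le> R z - ereal (inner \<xi> z))"

lemma is_tilted_min_iff_subdiff: "is_tilted_min \<xi> x \<longleftrightarrow> \<xi> \<in> subdiff R x"
proof
  assume min: "is_tilted_min \<xi> x"
  have "R x - ereal (inner \<xi> x) \<le> R x0 - ereal (inner \<xi> x0)"
    using min unfolding is_tilted_min_def by blast
  also have "\<dots> = ereal (Rval x0 - inner \<xi> x0)" using R_eq_Rval[OF x0_effdom] by simp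
  finally have "R x - ereal (inner \<xi> x) \<le> ereal (Rval x0 - inner \<xi> x0)" .
  then have "R x \<le> ereal (Rval x0 - inner \<xi> x0 + inner \<xi> x)"
    using R_not_minf[of x] by (cases "R x") auto
  then have x: "x \<in> effdom R" by (rule effdomI)
  have "Rval x + inner \<xi> (z - x) \<le> Rval z" if z: "z \<in> effdom R" for z
  proof -
    have "R x - ereal (inner \<xi> x) \<le> R z - ereal (inner \<xi> z)" using min unfolding is_tilted_min_def by blast
    then show ?thesis using R_eq_Rval[OF x] R_eq_Rval[OF z] by (simp add: inner_diff_right)
  qed
  with x show "\<xi> \<in> subdiff R x" unfolding subdiff_iff_Rval by blast
next
  assume "\<xi> \<in> subdiff R x"
  then have x: "x \<in> effdom R" and sub: "\<And>z. z \<in> effdom R \<Longrightarrow> Rval x + inner \<xi> (z - x) \<le> Rval z"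
    using subdiff_iff_Rval by auto
  have "R x - ereal (inner \<xi> x) \<le> R z - ereal (inner \<xi> z)" for z
  proof (cases "z \<in> effdom R")
    case True
    then show ?thesis using sub[OF True] R_eq_Rval[OF x] R_eq_Rval[OF True] by (simp add: inner_diff_right)
  qed (simp add: R_outside_effdom)
  then show "is_tilted_min \<xi> x" unfolding is_tilted_min_def by blast
qed

end

context strongly_convex_setting
begin

text \<open>The midpoint inequality makes every minimising sequence of the tilted function Cauchy.\<close>

lemma minimizing_sequence_Cauchy:
  assumes zs: "\<And>k. zs k \<in> effdom R"
    and lower: "\<And>z. z \<in> effdom R \<Longrightarrow> m \<le> tilted \<xi> z"
    and minimizing: "\<And>k. tilted \<xi> (zs k) < m + 1 / (real k + 1)"
  shows "Cauchy zs"
proof (rule metric_CauchyI)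
  fix e :: real assume e: "e > 0"
  obtain M :: nat where M: "4 / (\<sigma> * e\<^sup>2) < real M + 1"
    using reals_Archimedean2[of "4 / (\<sigma> * e\<^sup>2)"] by (smt (verit) of_nat_0_le_iff)
  have "dist (zs j) (zs k) < e" if "M \<le> j" "M \<le> k" for j k
  proof -
    let ?w = "(1/2) *\<^sub>R zs j + (1/2) *\<^sub>R zs k"
    have "2 * m + \<sigma> / 2 * (norm (zs j - zs k))\<^sup>2 \<le> tilted \<xi> (zs j) + tilted \<xi> (zs k)"
      using midpoint_tilted_ineq(2)[OF zs[of j] zs[of k], of \<xi>]
        lower[OF midpoint_tilted_ineq(1)[OF zs[of j] zs[of k]]] by linarith
    moreover have "1 / (real j + 1) \<le> 1 / (real M + 1)" "1 / (real k + 1) \<le> 1 / (real M + 1)"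
      using that by (auto simp: frac_le)
    ultimately have "\<sigma> / 4 * (norm (zs j - zs k))\<^sup>2 \<le> 1 / (real M + 1)"
      using minimizing[of j] minimizing[of k] by linarith
    also have "\<dots> < \<sigma> * e\<^sup>2 / 4"
      using M e sigma_pos by (simp add: field_simps)
    finally have "(norm (zs j - zs k))\<^sup>2 < e\<^sup>2" using sigma_pos by simp
    then show ?thesis using e by (simp add: dist_norm power_less_imp_less_base)
  qed
  then show "\<exists>M. \<forall>m\<ge>M. \<forall>n\<ge>M. dist (zs m) (zs n) < e" by blast
qed

lemma minimizing_sequence_limit:
  assumes zs: "\<And>k. zs k \<in> effdom R" and lim: "zs \<longlonglongrightarrow> z"
    and minimizing: "\<And>k. tilted \<xi> (zs k) < m + 1 / (real k + 1)"
  shows "z \<in> effdom R" and "tilted \<xi> z \<le> m"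
proof -
  have bound: "R z \<le> ereal (m + inner \<xi> z + \<epsilon>)" if "\<epsilon> > 0" for \<epsilon>
  proof -
    have closed: "closed {x. R x \<le> ereal (m + inner \<xi> z + \<epsilon>)}"
      using R_lsc unfolding lsc_fun_def by blast
    have "(\<lambda>k. 1 / (real k + 1)) \<longlonglongrightarrow> 0"
      using LIMSEQ_inverse_real_of_nat by (simp add: inverse_eq_divide add.commute)
    then have "(\<lambda>k. 1 / (real k + 1) + inner \<xi> (zs k)) \<longlonglongrightarrow> 0 + inner \<xi> z"
      by (intro tendsto_intros lim)
    then have "eventually (\<lambda>k. 1 / (real k + 1) + inner \<xi> (zs k) < inner \<xi> z + \<epsilon>) sequentially"
      using order_tendstoD(2) that by fastforce
    then have "eventually (\<lambda>k. zs k \<in> {x. R x \<le> ereal (m + inner \<xi> z + \<epsilon>)}) sequentially"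
    proof (rule eventually_mono)
      fix k assume "1 / (real k + 1) + inner \<xi> (zs k) < inner \<xi> z + \<epsilon>"
      then have "Rval (zs k) \<le> m + inner \<xi> z + \<epsilon>" using minimizing[of k] unfolding tilted_def by linarith
      then show "zs k \<in> {x. R x \<le> ereal (m + inner \<xi> z + \<epsilon>)}" using R_eq_Rval[OF zs] by simp
    qed
    from Lim_in_closed_set[OF closed this _ lim] show ?thesis by simp
  qed
  then show z: "z \<in> effdom R" using effdomI[of z "m + inner \<xi> z + 1"] by simp
  have "Rval z \<le> m + inner \<xi> z + \<epsilon>" if "\<epsilon> > 0" for \<epsilon>
    using bound[OF that] R_eq_Rval[OF z] by simp
  then have "Rval z \<le> m + inner \<xi> z" by (rule field_le_epsilon)
  then show "tilted \<xi> z \<le> m" unfolding tilted_def by simp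
qed

lemma tilted_min_exists: "\<exists>x. is_tilted_min \<xi> x"
proof -
  define m where "m = Inf (tilted \<xi> ` effdom R)"
  have "bdd_below (tilted \<xi> ` effdom R)"
    using tilted_bounded_below by (intro bdd_belowI2)
  then have lower: "\<And>z. z \<in> effdom R \<Longrightarrow> m \<le> tilted \<xi> z" unfolding m_def by (simp add: cInf_lower)
  have "\<exists>z \<in> effdom R. tilted \<xi> z < m + 1 / (real k + 1)" for k :: nat
  proof -
    have "Inf (tilted \<xi> ` effdom R) < m + 1 / (real k + 1)" unfolding m_def by simp
    then show ?thesis using cInf_lessD[of "tilted \<xi> ` effdom R"] x0_effdom by blast
  qed
  then obtain zs where zs: "\<And>k. zs k \<in> effdom R"
    and minimizing: "\<And>k. tilted \<xi> (zs k) < m + 1 / (real k + 1)"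
    by metis
  have "Cauchy zs" using minimizing_sequence_Cauchy[OF zs lower minimizing] .
  then obtain z where "zs \<longlonglongrightarrow> z" using Cauchy_convergent convergent_def by blast
  note z = minimizing_sequence_limit[OF zs this minimizing]
  have "Rval z + inner \<xi> (w - z) \<le> Rval w" if "w \<in> effdom R" for w
    using z(2) lower[OF that] unfolding tilted_def by (simp add: inner_diff_right)
  with z(1) show ?thesis using is_tilted_min_iff_subdiff subdiff_iff_Rval by blast
qed

lemma tilted_min_unique:
  assumes "is_tilted_min \<xi> a" "is_tilted_min \<xi> b"
  shows "a = b"
proof (rule ccontr)
  assume "a \<noteq> b"
  have a: "a \<in> effdom R" "\<And>z. z \<in> effdom R \<Longrightarrow> tilted \<xi> a \<le> tilted \<xi> z"
    using assms(1) is_tilted_min_iff_subdiff subdiff_iff_Rval by (auto simp: tilted_def inner_diff_right)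
  have b: "b \<in> effdom R" "\<And>z. z \<in> effdom R \<Longrightarrow> tilted \<xi> b \<le> tilted \<xi> z"
    using assms(2) is_tilted_min_iff_subdiff subdiff_iff_Rval by (auto simp: tilted_def inner_diff_right)
  have "\<sigma> / 2 * (norm (a - b))\<^sup>2 \<le> 0"
    using midpoint_tilted_ineq(2)[OF a(1) b(1), of \<xi>] a(2)[OF midpoint_tilted_ineq(1)[OF a(1) b(1)]]
      a(2)[OF b(1)] b(2)[OF a(1)] by linarith
  moreover have "\<sigma> / 2 * (norm (a - b))\<^sup>2 > 0" using \<open>a \<noteq> b\<close> sigma_pos by simp
  ultimately show False by linarith
qed

lemma grad_conj_is_tilted_min: "is_tilted_min \<xi> (grad_conj R \<xi>)"
proof -
  obtain x where x: "is_tilted_min \<xi> x" using tilted_min_exists by blast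
  have "grad_conj R \<xi> = (THE x. is_tilted_min \<xi> x)"
    unfolding grad_conj_def is_tilted_min_def ..
  also have "\<dots> = x" using x tilted_min_unique by blast
  finally show ?thesis using x by simp
qed

lemma grad_conj_subdiff: "\<xi> \<in> subdiff R (grad_conj R \<xi>)"
  using grad_conj_is_tilted_min is_tilted_min_iff_subdiff by blast

lemma grad_conj_effdom: "grad_conj R \<xi> \<in> effdom R"
  using grad_conj_subdiff subdiff_iff_Rval by blast

lemma grad_conj_eqI: "\<xi> \<in> subdiff R x \<Longrightarrow> grad_conj R \<xi> = x"
  using tilted_min_unique grad_conj_is_tilted_min is_tilted_min_iff_subdiff by blast

lemma grad_conj_strongly_monotone:
  "2 * \<sigma> * (norm (grad_conj R \<xi> - grad_conj R \<zeta>))\<^sup>2 \<le> inner (\<xi> - \<zeta>) (grad_conj R \<xi> - grad_conj R \<zeta>)"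
proof -
  let ?x = "grad_conj R \<xi>" and ?z = "grad_conj R \<zeta>"
  define s where "s = \<sigma> * (norm (?x - ?z))\<^sup>2"
  have "Rval ?x + inner \<xi> (?z - ?x) + s \<le> Rval ?z"
    using subgradient_strong_ineq[OF grad_conj_subdiff[of \<xi>] grad_conj_effdom[of \<zeta>]]
    unfolding s_def by (simp add: norm_minus_commute)
  moreover have "Rval ?z + inner \<zeta> (?x - ?z) + s \<le> Rval ?x"
    using subgradient_strong_ineq[OF grad_conj_subdiff[of \<zeta>] grad_conj_effdom[of \<xi>]] unfolding s_def .
  moreover have "inner (\<xi> - \<zeta>) (?x - ?z) = - inner \<xi> (?z - ?x) - inner \<zeta> (?x - ?z)"
    by (simp add: inner_diff_left inner_diff_right)
  ultimately have "s + s \<le> inner (\<xi> - \<zeta>) (?x - ?z)" by linarith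
  then show ?thesis unfolding s_def by simp
qed

lemma grad_conj_lipschitz: "norm (grad_conj R \<xi> - grad_conj R \<zeta>) \<le> norm (\<xi> - \<zeta>) / (2 * \<sigma>)"
proof -
  let ?d = "norm (grad_conj R \<xi> - grad_conj R \<zeta>)"
  have "2 * \<sigma> * ?d\<^sup>2 \<le> norm (\<xi> - \<zeta>) * ?d"
    using grad_conj_strongly_monotone[of \<xi> \<zeta>]
      norm_cauchy_schwarz[of "\<xi> - \<zeta>" "grad_conj R \<xi> - grad_conj R \<zeta>"] by linarith
  then have "?d * (2 * \<sigma> * ?d) \<le> ?d * norm (\<xi> - \<zeta>)"
    by (simp add: power2_eq_square algebra_simps)
  then have "?d = 0 \<or> 2 * \<sigma> * ?d \<le> norm (\<xi> - \<zeta>)"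
    by (metis mult_le_cancel_left_pos norm_ge_zero order_le_less)
  then show ?thesis using sigma_pos by (auto simp: field_simps)
qed

lemma grad_conj_tendsto:
  assumes "f \<longlonglongrightarrow> \<xi>"
  shows "(\<lambda>l. grad_conj R (f l)) \<longlonglongrightarrow> grad_conj R \<xi>"
proof (rule tendsto_norm_diff_bound)
  show "eventually (\<lambda>l. norm (grad_conj R (f l) - grad_conj R \<xi>) \<le> norm (f l - \<xi>) / (2 * \<sigma>)) sequentially"
    using grad_conj_lipschitz by simp
  show "(\<lambda>l. norm (f l - \<xi>) / (2 * \<sigma>)) \<longlonglongrightarrow> 0"
    using tendsto_divide_zero[OF tendsto_norm_diff_zero[OF assms]] .
qed

lemma Breg_three_point:
  assumes "z \<in> effdom R"
  shows "Breg \<xi>' z (grad_conj R \<xi>') \<le> Breg \<xi> z (grad_conj R \<xi>) + (norm (\<xi>' - \<xi>))\<^sup>2 / (4 * \<sigma>)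
           + inner (\<xi>' - \<xi>) (grad_conj R \<xi> - z)"
proof -
  let ?x = "grad_conj R \<xi>" and ?x' = "grad_conj R \<xi>'"
  have "Rval ?x + inner \<xi> (?x' - ?x) + \<sigma> * (norm (?x' - ?x))\<^sup>2 \<le> Rval ?x'"
    using subgradient_strong_ineq[OF grad_conj_subdiff grad_conj_effdom] .
  moreover have "inner (\<xi>' - \<xi>) (?x' - ?x) \<le> (norm (\<xi>' - \<xi>))\<^sup>2 / (4 * \<sigma>) + \<sigma> * (norm (?x' - ?x))\<^sup>2"
    using norm_cauchy_schwarz[of "\<xi>' - \<xi>" "?x' - ?x"] young_ineq[OF sigma_pos] by (rule order_trans)
  moreover have "Breg \<xi>' z ?x' - Breg \<xi> z ?x - inner (\<xi>' - \<xi>) (?x - z) =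
      Rval ?x - Rval ?x' + inner \<xi> (?x' - ?x) + inner (\<xi>' - \<xi>) (?x' - ?x)"
    unfolding Breg_def by (simp add: inner_diff_left inner_diff_right)
  ultimately show ?thesis by linarith
qed

end

section \<open>Adjoints, step sizes and momentum coefficients\<close>

lemma adjoint_norm_le:
  assumes adj: "\<And>v w. inner (blinfun_apply T v) w = inner v (A w)"
  shows "norm (A w) \<le> norm T * norm w"
proof -
  have "(norm (A w))\<^sup>2 = inner (blinfun_apply T (A w)) w"
    using adj[of "A w" w] by (simp add: power2_norm_eq_inner)
  also have "\<dots> \<le> norm T * norm (A w) * norm w"
    using norm_cauchy_schwarz[of "blinfun_apply T (A w)" w] norm_blinfun[of T "A w"]
    by (meson mult_right_mono norm_ge_zero order_trans)
  finally have "norm (A w) * norm (A w) \<le> norm (A w) * (norm T * norm w)"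
    by (simp add: power2_eq_square algebra_simps)
  then show ?thesis
    by (metis mult_le_cancel_left_pos mult_nonneg_nonneg norm_ge_zero order_le_less)
qed

lemma adjoint_diff_norm_le:
  assumes "\<And>v w. inner (blinfun_apply T v) w = inner v (A w)"
    and "\<And>v w. inner (blinfun_apply T' v) w = inner v (A' w)"
  shows "norm (A w - A' w) \<le> norm (T - T') * norm w"
  using assms by (intro adjoint_norm_le[where A = "\<lambda>w. A w - A' w"])
    (simp add: blinfun.diff_left inner_diff_left inner_diff_right)

lemma adjoint_diff:
  assumes adj: "\<And>v w. inner (blinfun_apply T v) w = inner v (A w)"
  shows "A (a - b) = A a - A b"
proof -
  let ?d = "A (a - b) - (A a - A b)"
  have "inner ?d ?d = inner (blinfun_apply T ?d) (a - b) - inner (blinfun_apply T ?d) a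
      + inner (blinfun_apply T ?d) b"
    using adj[of ?d "a - b"] adj[of ?d a] adj[of ?d b] by (simp add: inner_diff_right inner_commute)
  also have "\<dots> = 0" by (simp add: inner_diff_right)
  finally show ?thesis by simp
qed

lemma adjoint_zero:
  assumes "\<And>v w. inner (blinfun_apply T v) w = inner v (A w)"
  shows "A 0 = 0"
  using adjoint_diff[OF assms, of 0 0] by simp

lemma stepsize_nonneg: "0 \<le> \<mu>0 \<Longrightarrow> 0 \<le> \<mu>1 \<Longrightarrow> 0 \<le> stepsize ad Lc \<mu>0 \<mu>1 r g"
  unfolding stepsize_def by auto

lemma stepsize_le_max: "0 \<le> \<mu>0 \<Longrightarrow> 0 \<le> \<mu>1 \<Longrightarrow> stepsize ad Lc \<mu>0 \<mu>1 r g \<le> max (\<mu>0 / Lc\<^sup>2) \<mu>1"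
  unfolding stepsize_def by auto

lemma stepsize_mult_norm_le:
  assumes "Lc > 0" "\<mu>0 > 0" "norm g \<le> Lc * norm r"
  shows "stepsize ad Lc \<mu>0 \<mu>1 r g * (norm g)\<^sup>2 \<le> \<mu>0 * (norm r)\<^sup>2"
proof (cases ad)
  case False
  have "(norm g)\<^sup>2 \<le> (Lc * norm r)\<^sup>2" using assms(3) by (simp add: power_mono)
  then have "\<mu>0 / Lc\<^sup>2 * (norm g)\<^sup>2 \<le> \<mu>0 / Lc\<^sup>2 * (Lc * norm r)\<^sup>2"
    using assms(2) by (intro mult_left_mono) auto
  also have "\<dots> = \<mu>0 * (norm r)\<^sup>2" using assms(1) by (simp add: power_mult_distrib)
  finally show ?thesis using False unfolding stepsize_def by simp
next
  case True
  show ?thesis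
  proof (cases "r = 0 \<or> g = 0")
    case False
    then have "stepsize ad Lc \<mu>0 \<mu>1 r g \<le> \<mu>0 * (norm r)\<^sup>2 / (norm g)\<^sup>2"
      using True unfolding stepsize_def by simp
    then have "stepsize ad Lc \<mu>0 \<mu>1 r g * (norm g)\<^sup>2 \<le> \<mu>0 * (norm r)\<^sup>2 / (norm g)\<^sup>2 * (norm g)\<^sup>2"
      by (rule mult_right_mono) simp
    then show ?thesis using False by simp
  qed (use True assms(2) in \<open>auto simp: stepsize_def\<close>)
qed

lemma stepsize_tendsto:
  assumes r: "r \<longlonglongrightarrow> r0" "r0 \<noteq> 0" and g: "g \<longlonglongrightarrow> g0" "g0 \<noteq> 0"
  shows "(\<lambda>l. stepsize ad Lc \<mu>0 \<mu>1 (r l) (g l)) \<longlonglongrightarrow> stepsize ad Lc \<mu>0 \<mu>1 r0 g0"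
proof (cases ad)
  case True
  have "(\<lambda>l. min (\<mu>0 * (norm (r l))\<^sup>2 / (norm (g l))\<^sup>2) \<mu>1) \<longlonglongrightarrow> min (\<mu>0 * (norm r0)\<^sup>2 / (norm g0)\<^sup>2) \<mu>1"
    using g(2) by (intro tendsto_intros r g) simp
  moreover have "eventually (\<lambda>l. r l \<noteq> 0 \<and> g l \<noteq> 0) sequentially"
    using tendsto_imp_eventually_ne[OF r] tendsto_imp_eventually_ne[OF g] by (simp add: eventually_conj_iff)
  then have "eventually (\<lambda>l. min (\<mu>0 * (norm (r l))\<^sup>2 / (norm (g l))\<^sup>2) \<mu>1 = stepsize ad Lc \<mu>0 \<mu>1 (r l) (g l)) sequentially"
    by eventually_elim (simp add: stepsize_def True)
  ultimately show ?thesis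
    using True r(2) g(2) by (simp add: stepsize_def Lim_transform_eventually)
qed (simp add: stepsize_def)

definition momentum_coeff :: "real \<Rightarrow> real \<Rightarrow> real \<Rightarrow> 'a::real_inner \<Rightarrow> 'a \<Rightarrow> real \<Rightarrow> real" where
  "momentum_coeff \<sigma> \<beta> \<alpha> g m \<gamma> =
     (if m = 0 then 0 else min (max 0 ((\<alpha> * inner g m - 2 * \<sigma> * \<gamma>) / (norm m)\<^sup>2)) \<beta>)"

lemma momentum_coeff_nonneg: "0 \<le> \<beta> \<Longrightarrow> 0 \<le> momentum_coeff \<sigma> \<beta> \<alpha> g m \<gamma>"
  unfolding momentum_coeff_def by auto

lemma momentum_coeff_le: "0 \<le> \<beta> \<Longrightarrow> momentum_coeff \<sigma> \<beta> \<alpha> g m \<gamma> \<le> \<beta>"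
  unfolding momentum_coeff_def by auto

lemma momentum_coeff_pos_imp:
  assumes "momentum_coeff \<sigma> \<beta> \<alpha> g m \<gamma> > 0"
  shows "m \<noteq> 0" and "momentum_coeff \<sigma> \<beta> \<alpha> g m \<gamma> * (norm m)\<^sup>2 \<le> \<alpha> * inner g m - 2 * \<sigma> * \<gamma>"
proof -
  show m: "m \<noteq> 0" using assms unfolding momentum_coeff_def by auto
  have "momentum_coeff \<sigma> \<beta> \<alpha> g m \<gamma> \<le> (\<alpha> * inner g m - 2 * \<sigma> * \<gamma>) / (norm m)\<^sup>2"
    using assms m unfolding momentum_coeff_def by (auto simp: min_def max_def split: if_splits)
  then show "momentum_coeff \<sigma> \<beta> \<alpha> g m \<gamma> * (norm m)\<^sup>2 \<le> \<alpha> * inner g m - 2 * \<sigma> * \<gamma>"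
    using m by (simp add: le_divide_eq)
qed

text \<open>This is the purpose of the momentum rule: adding the momentum term never costs more, in the
  Bregman estimate, than the bare gradient step.\<close>

lemma momentum_coeff_energy:
  fixes g m :: "'a::real_inner" and \<sigma> \<beta> \<alpha> \<gamma> :: real
  assumes "\<sigma> > 0" and "0 \<le> \<beta>"
  defines "b \<equiv> momentum_coeff \<sigma> \<beta> \<alpha> g m \<gamma>"
  shows "(norm (b *\<^sub>R m - \<alpha> *\<^sub>R g))\<^sup>2 / (4 * \<sigma>) + b * \<gamma> \<le> \<alpha>\<^sup>2 * (norm g)\<^sup>2 / (4 * \<sigma>)"
proof -
  have "2 * \<sigma> * (b * \<gamma>) \<le> b * (\<alpha> * inner g m) - b * b * (norm m)\<^sup>2"
  proof (cases "b > 0")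
    case True
    then have "b * (b * (norm m)\<^sup>2) \<le> b * (\<alpha> * inner g m - 2 * \<sigma> * \<gamma>)"
      using momentum_coeff_pos_imp(2)[of \<sigma> \<beta> \<alpha> g m \<gamma>] unfolding b_def by (simp add: mult_left_mono)
    then show ?thesis by (simp add: algebra_simps)
  next
    case False
    then have "b = 0" using momentum_coeff_nonneg[OF assms(2), of \<sigma> \<alpha> g m \<gamma>] unfolding b_def by linarith
    then show ?thesis by simp
  qed
  moreover have "(norm (b *\<^sub>R m - \<alpha> *\<^sub>R g))\<^sup>2 = \<alpha>\<^sup>2 * (norm g)\<^sup>2 - 2 * (b * (\<alpha> * inner g m)) + b * b * (norm m)\<^sup>2"
    unfolding power2_norm_eq_inner
    by (simp add: inner_diff_left inner_diff_right inner_commute algebra_simps power2_eq_square)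
  moreover have "0 \<le> b * b * (norm m)\<^sup>2" by simp
  ultimately have "(norm (b *\<^sub>R m - \<alpha> *\<^sub>R g))\<^sup>2 + 4 * \<sigma> * (b * \<gamma>) \<le> \<alpha>\<^sup>2 * (norm g)\<^sup>2" by linarith
  then have "((norm (b *\<^sub>R m - \<alpha> *\<^sub>R g))\<^sup>2 + 4 * \<sigma> * (b * \<gamma>)) / (4 * \<sigma>) \<le> \<alpha>\<^sup>2 * (norm g)\<^sup>2 / (4 * \<sigma>)"
    using assms(1) by (simp add: divide_right_mono)
  then show ?thesis using assms(1) by (simp add: add_divide_distrib)
qed

lemma momentum_coeff_tendsto:
  assumes ag: "(\<lambda>l. \<alpha> l *\<^sub>R g l) \<longlonglongrightarrow> \<alpha>0 *\<^sub>R g0"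
    and m: "m \<longlonglongrightarrow> m0" "m0 \<noteq> 0" and \<gamma>: "\<gamma> \<longlonglongrightarrow> \<gamma>0"
  shows "(\<lambda>l. momentum_coeff \<sigma> \<beta> (\<alpha> l) (g l) (m l) (\<gamma> l)) \<longlonglongrightarrow> momentum_coeff \<sigma> \<beta> \<alpha>0 g0 m0 \<gamma>0"
proof -
  have "(\<lambda>l. min (max 0 ((inner (\<alpha> l *\<^sub>R g l) (m l) - 2 * \<sigma> * \<gamma> l) / (norm (m l))\<^sup>2)) \<beta>)
      \<longlonglongrightarrow> min (max 0 ((inner (\<alpha>0 *\<^sub>R g0) m0 - 2 * \<sigma> * \<gamma>0) / (norm m0)\<^sup>2)) \<beta>"
    using m(2) by (intro tendsto_intros ag m \<gamma>) simp
  moreover have "eventually (\<lambda>l. m l \<noteq> 0) sequentially" using tendsto_imp_eventually_ne[OF m] .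
  then have "eventually (\<lambda>l. min (max 0 ((inner (\<alpha> l *\<^sub>R g l) (m l) - 2 * \<sigma> * \<gamma> l) / (norm (m l))\<^sup>2)) \<beta>
      = momentum_coeff \<sigma> \<beta> (\<alpha> l) (g l) (m l) (\<gamma> l)) sequentially"
    by eventually_elim (simp add: momentum_coeff_def)
  ultimately show ?thesis using m(2) by (simp add: momentum_coeff_def Lim_transform_eventually)
qed

section \<open>The iteration\<close>

locale heavy_ball_setting = strongly_convex_setting R \<sigma> x0 \<xi>0
  for R :: "'a::{real_inner,complete_space} \<Rightarrow> ereal" and \<sigma> x0 \<xi>0 +
  fixes F :: "'a \<Rightarrow> 'b::{real_inner,complete_space}"
    and L :: "'a \<Rightarrow> ('a \<Rightarrow>\<^sub>L 'b)" and Ladj :: "'a \<Rightarrow> 'b \<Rightarrow> 'a"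
    and \<eta> Lc \<mu>0 \<mu>1 \<beta> \<tau> \<rho> :: real and adaptive :: bool and y :: 'b and xbar :: 'a
  assumes rho_pos: "\<rho> > 0"
    and xbar_sol: "F xbar = y"
    and xbar_breg: "bregman R \<xi>0 xbar x0 \<le> ereal (\<sigma> * \<rho>\<^sup>2)"
    and L_cont: "continuous_on (cball x0 (2 * \<rho>)) L"
    and Ladj_adj: "\<And>x v w. inner (blinfun_apply (L x) v) w = inner v (Ladj x w)"
    and eta: "0 \<le> \<eta>" "\<eta> < 1"
    and tcc: "\<And>x x'. x \<in> cball x0 (2 * \<rho>) \<Longrightarrow> x' \<in> cball x0 (2 * \<rho>) \<Longrightarrow>
              norm (F x - F x' - blinfun_apply (L x') (x - x')) \<le> \<eta> * norm (F x - F x')"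
    and Lc_pos: "Lc > 0" and L_bound: "\<And>x. x \<in> cball x0 (2 * \<rho>) \<Longrightarrow> norm (L x) \<le> Lc"
    and tau: "\<tau> > 1" and mu0: "\<mu>0 > 0" and mu1: "\<mu>1 > 0" and beta: "\<beta> > 0"
    and cond: "1 - (1 + \<eta>) / \<tau> - \<eta> - \<mu>0 / (4 * \<sigma>) > 0"
begin

abbreviation ball_2rho :: "'a set" where "ball_2rho \<equiv> cball x0 (2 * \<rho>)"

text \<open>The iterates for noise level \<open>d\<close> and data \<open>yd\<close>; \<open>d = 0\<close>, \<open>yd = y\<close> gives the exact-data iteration.\<close>

definition state :: "real \<Rightarrow> 'b \<Rightarrow> nat \<Rightarrow> 'a \<times> 'a \<times> real" where
  "state d yd n = iter R F Ladj \<eta> \<sigma> Lc adaptive \<mu>0 \<mu>1 \<beta> d yd \<xi>0 n"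

definition xi_n :: "real \<Rightarrow> 'b \<Rightarrow> nat \<Rightarrow> 'a" where
  "xi_n d yd n = fst (state d yd n)"
definition xi_prev :: "real \<Rightarrow> 'b \<Rightarrow> nat \<Rightarrow> 'a" where
  "xi_prev d yd n = fst (snd (state d yd n))"
definition gam_n :: "real \<Rightarrow> 'b \<Rightarrow> nat \<Rightarrow> real" where
  "gam_n d yd n = snd (snd (state d yd n))"
definition x_n :: "real \<Rightarrow> 'b \<Rightarrow> nat \<Rightarrow> 'a" where
  "x_n d yd n = grad_conj R (xi_n d yd n)"
definition res_n :: "real \<Rightarrow> 'b \<Rightarrow> nat \<Rightarrow> 'b" where
  "res_n d yd n = F (x_n d yd n) - yd"
definition grad_n :: "real \<Rightarrow> 'b \<Rightarrow> nat \<Rightarrow> 'a" where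
  "grad_n d yd n = Ladj (x_n d yd n) (res_n d yd n)"
definition alpha_n :: "real \<Rightarrow> 'b \<Rightarrow> nat \<Rightarrow> real" where
  "alpha_n d yd n = stepsize adaptive Lc \<mu>0 \<mu>1 (res_n d yd n) (grad_n d yd n)"
definition mom_n :: "real \<Rightarrow> 'b \<Rightarrow> nat \<Rightarrow> 'a" where
  "mom_n d yd n = xi_n d yd n - xi_prev d yd n"
definition beta_n :: "real \<Rightarrow> 'b \<Rightarrow> nat \<Rightarrow> real" where
  "beta_n d yd n = momentum_coeff \<sigma> \<beta> (alpha_n d yd n) (grad_n d yd n) (mom_n d yd n) (gam_n d yd n)"

lemma state_Suc: "state d yd (Suc n) =
   (xi_n d yd n - alpha_n d yd n *\<^sub>R grad_n d yd n + beta_n d yd n *\<^sub>R mom_n d yd n, xi_n d yd n,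
    inner (beta_n d yd n *\<^sub>R mom_n d yd n - alpha_n d yd n *\<^sub>R grad_n d yd n)
          (grad_conj R (xi_n d yd n - alpha_n d yd n *\<^sub>R grad_n d yd n + beta_n d yd n *\<^sub>R mom_n d yd n)
           - x_n d yd n)
     - (1 - \<eta>) * alpha_n d yd n * (norm (res_n d yd n))\<^sup>2
     + (1 + \<eta>) * alpha_n d yd n * d * norm (res_n d yd n) + beta_n d yd n * gam_n d yd n)"
proof -
  obtain a b c where "state d yd n = (a, b, c)" by (cases "state d yd n") auto
  then show ?thesis
    unfolding state_def xi_n_def xi_prev_def gam_n_def x_n_def res_n_def grad_n_def alpha_n_def
      mom_n_def beta_n_def momentum_coeff_def
    by (simp add: Let_def algebra_simps)
qed

lemma xi_n_Suc: "xi_n d yd (Suc n) = xi_n d yd n - alpha_n d yd n *\<^sub>R grad_n d yd n + beta_n d yd n *\<^sub>R mom_n d yd n"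
  unfolding xi_n_def[of d yd "Suc n"] state_Suc by simp

lemma xi_prev_Suc: "xi_prev d yd (Suc n) = xi_n d yd n"
  unfolding xi_prev_def[of d yd "Suc n"] state_Suc by simp

lemma mom_n_Suc: "mom_n d yd (Suc n) = beta_n d yd n *\<^sub>R mom_n d yd n - alpha_n d yd n *\<^sub>R grad_n d yd n"
  unfolding mom_n_def[of d yd "Suc n"] xi_prev_Suc xi_n_Suc by simp

lemma gam_n_Suc: "gam_n d yd (Suc n) = inner (mom_n d yd (Suc n)) (x_n d yd (Suc n) - x_n d yd n)
     - (1 - \<eta>) * alpha_n d yd n * (norm (res_n d yd n))\<^sup>2
     + (1 + \<eta>) * alpha_n d yd n * d * norm (res_n d yd n) + beta_n d yd n * gam_n d yd n"
  unfolding gam_n_def[of d yd "Suc n"] state_Suc mom_n_Suc x_n_def[of d yd "Suc n"] xi_n_Suc by simp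

lemma xi_n_0: "xi_n d yd 0 = \<xi>0" and xi_prev_0: "xi_prev d yd 0 = \<xi>0" and gam_n_0: "gam_n d yd 0 = 0"
  unfolding xi_n_def xi_prev_def gam_n_def state_def by simp_all

lemma mom_n_0: "mom_n d yd 0 = 0"
  unfolding mom_n_def xi_n_0 xi_prev_0 by simp

lemma x_n_0: "x_n d yd 0 = x0"
  unfolding x_n_def xi_n_0 by (rule grad_conj_eqI[OF xi0_subdiff])

end

context heavy_ball_setting
begin

lemma xbar_effdom: "xbar \<in> effdom R" and Breg_xbar_x0: "Breg \<xi>0 xbar x0 \<le> \<sigma> * \<rho>\<^sup>2"
  using bregman_le_ereal[OF xi0_subdiff xbar_breg] by blast+

lemma near_xbar_if_Breg_le:
  assumes "\<xi> \<in> subdiff R x" "Breg \<xi> xbar x \<le> \<sigma> * \<rho>\<^sup>2"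
  shows "norm (xbar - x) \<le> \<rho>"
proof -
  have "\<sigma> * (norm (xbar - x))\<^sup>2 \<le> \<sigma> * \<rho>\<^sup>2" using Breg_ge[OF assms(1) xbar_effdom] assms(2) by linarith
  then have "(norm (xbar - x))\<^sup>2 \<le> \<rho>\<^sup>2" using sigma_pos by simp
  then show ?thesis using rho_pos by (simp add: power2_le_iff_abs_le)
qed

lemma in_ball_2rho_if_Breg_le:
  assumes "\<xi> \<in> subdiff R x" "Breg \<xi> xbar x \<le> \<sigma> * \<rho>\<^sup>2"
  shows "x \<in> ball_2rho"
proof -
  have "norm (x0 - x) \<le> norm (x0 - xbar) + norm (xbar - x)"
    by (rule norm_diff_triangle_ineq[of x0 xbar xbar x, simplified])
  also have "\<dots> \<le> 2 * \<rho>"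
    using near_xbar_if_Breg_le[OF assms] near_xbar_if_Breg_le[OF xi0_subdiff Breg_xbar_x0]
    by (simp add: norm_minus_commute)
  finally show ?thesis by (simp add: dist_norm)
qed

lemma xbar_in_ball_2rho: "xbar \<in> ball_2rho"
  using near_xbar_if_Breg_le[OF xi0_subdiff Breg_xbar_x0] rho_pos by (simp add: dist_norm norm_minus_commute)

lemma Ladj_norm_le: "x \<in> ball_2rho \<Longrightarrow> norm (Ladj x w) \<le> Lc * norm w"
  using adjoint_norm_le[OF Ladj_adj, of x w] L_bound by (meson mult_right_mono norm_ge_zero order_trans)

lemma residual_inner_lower:
  assumes x: "x \<in> ball_2rho" and noise: "norm (yd - y) \<le> d"
  shows "(1 - \<eta>) * (norm (F x - yd))\<^sup>2 - (1 + \<eta>) * d * norm (F x - yd) \<le> inner (Ladj x (F x - yd)) (x - xbar)"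
proof -
  define r where "r = F x - yd"
  define e where "e = F xbar - F x - blinfun_apply (L x) (xbar - x)"
  have "norm (F xbar - F x) \<le> norm r + d"
    using norm_triangle_ineq[of r "yd - y"] noise unfolding r_def xbar_sol by (simp add: norm_minus_commute)
  then have e: "norm e \<le> \<eta> * (norm r + d)"
    using tcc[OF xbar_in_ball_2rho x] eta unfolding e_def by (meson mult_left_mono order_trans)
  have "blinfun_apply (L x) (x - xbar) = - blinfun_apply (L x) (xbar - x)"
    by (metis blinfun.minus_right minus_diff_eq)
  then have "blinfun_apply (L x) (x - xbar) = r + (yd - y) + e"
    unfolding e_def r_def xbar_sol by (simp add: algebra_simps)
  moreover have "inner (Ladj x r) (x - xbar) = inner (blinfun_apply (L x) (x - xbar)) r"
    using Ladj_adj[of x "x - xbar" r] by (simp add: inner_commute)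
  ultimately have "inner (Ladj x r) (x - xbar) = (norm r)\<^sup>2 + inner (yd - y) r + inner e r"
    by (simp add: inner_add_left power2_norm_eq_inner)
  moreover have "- (d * norm r) \<le> inner (yd - y) r"
    using Cauchy_Schwarz_ineq2[of "yd - y" r] mult_right_mono[OF noise norm_ge_zero[of r]] by linarith
  moreover have "- (\<eta> * (norm r + d) * norm r) \<le> inner e r"
    using Cauchy_Schwarz_ineq2[of e r] mult_right_mono[OF e norm_ge_zero[of r]] by linarith
  moreover have "(1 - \<eta>) * (norm r)\<^sup>2 - (1 + \<eta>) * d * norm r = (norm r)\<^sup>2 - d * norm r - \<eta> * (norm r + d) * norm r"
    by (simp add: power2_eq_square algebra_simps)
  ultimately show ?thesis unfolding r_def by linarith
qed

lemma F_lipschitz_ball_2rho: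
  assumes "x \<in> ball_2rho" "x' \<in> ball_2rho"
  shows "norm (F x - F x') \<le> Lc / (1 - \<eta>) * norm (x - x')"
proof -
  have "norm (F x - F x') \<le> norm (F x - F x' - blinfun_apply (L x') (x - x')) + norm (blinfun_apply (L x') (x - x'))"
    using norm_triangle_ineq[of "F x - F x' - blinfun_apply (L x') (x - x')" "blinfun_apply (L x') (x - x')"]
    by simp
  also have "\<dots> \<le> \<eta> * norm (F x - F x') + Lc * norm (x - x')"
    using tcc[OF assms] norm_blinfun[of "L x'" "x - x'"]
      mult_right_mono[OF L_bound[OF assms(2)] norm_ge_zero[of "x - x'"]] by linarith
  finally show ?thesis using eta by (simp add: field_simps)
qed

lemma alpha_n_nonneg: "0 \<le> alpha_n d yd n"
  unfolding alpha_n_def using mu0 mu1 by (simp add: stepsize_nonneg)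

lemma alpha_n_le: "alpha_n d yd n \<le> max (\<mu>0 / Lc\<^sup>2) \<mu>1"
  unfolding alpha_n_def using mu0 mu1 by (simp add: stepsize_le_max)

lemma alpha_n_abs_le: "\<bar>alpha_n d yd n\<bar> \<le> max (\<mu>0 / Lc\<^sup>2) \<mu>1"
  using alpha_n_nonneg alpha_n_le by simp

lemma beta_n_nonneg: "0 \<le> beta_n d yd n" and beta_n_le: "beta_n d yd n \<le> \<beta>"
  unfolding beta_n_def using beta by (simp_all add: momentum_coeff_nonneg momentum_coeff_le)

lemma beta_n_abs_le: "\<bar>beta_n d yd n\<bar> \<le> \<beta>"
  using beta_n_nonneg beta_n_le by simp

lemma alpha_grad_n_le:
  "x_n d yd n \<in> ball_2rho \<Longrightarrow> alpha_n d yd n * (norm (grad_n d yd n))\<^sup>2 \<le> \<mu>0 * (norm (res_n d yd n))\<^sup>2"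
  unfolding alpha_n_def grad_n_def using Lc_pos mu0 Ladj_norm_le by (simp add: stepsize_mult_norm_le)

end

context heavy_ball_setting
begin

definition c0 :: real where "c0 = 1 - \<eta> - \<mu>0 / (4 * \<sigma>)"

lemma c0_gt: "(1 + \<eta>) / \<tau> < c0"
  using cond unfolding c0_def by linarith

lemma c0_pos: "c0 > 0"
  using c0_gt eta tau by (smt (verit) divide_pos_pos)

lemma mom_inner_Suc_le:
  assumes x: "x_n d yd n \<in> ball_2rho" and noise: "norm (yd - y) \<le> d"
    and mom: "inner (mom_n d yd n) (x_n d yd n - xbar) \<le> gam_n d yd n"
  shows "inner (mom_n d yd (Suc n)) (x_n d yd n - xbar) \<le> beta_n d yd n * gam_n d yd n
      - (1 - \<eta>) * alpha_n d yd n * (norm (res_n d yd n))\<^sup>2 + (1 + \<eta>) * alpha_n d yd n * d * norm (res_n d yd n)"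
proof -
  let ?r = "res_n d yd n" and ?\<alpha> = "alpha_n d yd n" and ?\<beta> = "beta_n d yd n"
  have "?\<alpha> * ((1 - \<eta>) * (norm ?r)\<^sup>2 - (1 + \<eta>) * d * norm ?r) \<le> ?\<alpha> * inner (grad_n d yd n) (x_n d yd n - xbar)"
    using residual_inner_lower[OF x noise] alpha_n_nonneg unfolding grad_n_def res_n_def
    by (simp add: mult_left_mono)
  moreover have "?\<beta> * inner (mom_n d yd n) (x_n d yd n - xbar) \<le> ?\<beta> * gam_n d yd n"
    using mom beta_n_nonneg by (rule mult_left_mono)
  ultimately show ?thesis
    unfolding mom_n_Suc by (simp add: inner_diff_left algebra_simps)
qed

lemma mom_inner_le_gam_Suc:
  assumes "x_n d yd n \<in> ball_2rho" "norm (yd - y) \<le> d"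
    and "inner (mom_n d yd n) (x_n d yd n - xbar) \<le> gam_n d yd n"
  shows "inner (mom_n d yd (Suc n)) (x_n d yd (Suc n) - xbar) \<le> gam_n d yd (Suc n)"
  using mom_inner_Suc_le[OF assms] unfolding gam_n_Suc by (simp add: inner_diff_right)

lemma Breg_Suc_le:
  assumes x: "x_n d yd n \<in> ball_2rho" and noise: "norm (yd - y) \<le> d"
    and mom: "inner (mom_n d yd n) (x_n d yd n - xbar) \<le> gam_n d yd n"
    and discrepancy: "(1 + \<eta>) * d \<le> c0 * norm (res_n d yd n)"
  shows "Breg (xi_n d yd (Suc n)) xbar (x_n d yd (Suc n)) \<le> Breg (xi_n d yd n) xbar (x_n d yd n)"
proof -
  let ?r = "res_n d yd n" and ?\<alpha> = "alpha_n d yd n" and ?m' = "mom_n d yd (Suc n)"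
  have step: "xi_n d yd (Suc n) - xi_n d yd n = ?m'"
    unfolding mom_n_def[of d yd "Suc n"] xi_prev_Suc ..
  have "Breg (xi_n d yd (Suc n)) xbar (x_n d yd (Suc n))
      \<le> Breg (xi_n d yd n) xbar (x_n d yd n) + (norm ?m')\<^sup>2 / (4 * \<sigma>) + inner ?m' (x_n d yd n - xbar)"
    using Breg_three_point[OF xbar_effdom, where \<xi>' = "xi_n d yd (Suc n)" and \<xi> = "xi_n d yd n"]
    unfolding x_n_def step .
  moreover have "(norm ?m')\<^sup>2 / (4 * \<sigma>) + beta_n d yd n * gam_n d yd n \<le> ?\<alpha>\<^sup>2 * (norm (grad_n d yd n))\<^sup>2 / (4 * \<sigma>)"
    unfolding mom_n_Suc beta_n_def using sigma_pos beta by (intro momentum_coeff_energy) auto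
  moreover have "?\<alpha>\<^sup>2 * (norm (grad_n d yd n))\<^sup>2 \<le> ?\<alpha> * (\<mu>0 * (norm ?r)\<^sup>2)"
    using mult_left_mono[OF alpha_grad_n_le[OF x] alpha_n_nonneg] by (simp add: power2_eq_square mult.assoc)
  then have "?\<alpha>\<^sup>2 * (norm (grad_n d yd n))\<^sup>2 / (4 * \<sigma>) \<le> ?\<alpha> * (\<mu>0 * (norm ?r)\<^sup>2) / (4 * \<sigma>)"
    using sigma_pos by (simp add: divide_right_mono)
  moreover have "?\<alpha> * (\<mu>0 * (norm ?r)\<^sup>2) / (4 * \<sigma>) = (1 - \<eta>) * ?\<alpha> * (norm ?r)\<^sup>2 - (1 + \<eta>) * ?\<alpha> * d * norm ?r
      - ?\<alpha> * norm ?r * (c0 * norm ?r - (1 + \<eta>) * d)"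
    unfolding c0_def using sigma_pos by (simp add: field_simps power2_eq_square)
  moreover have "0 \<le> ?\<alpha> * norm ?r * (c0 * norm ?r - (1 + \<eta>) * d)"
    using alpha_n_nonneg discrepancy by simp
  ultimately show ?thesis using mom_inner_Suc_le[OF x noise mom] by linarith
qed

lemma iterates_near_solution:
  assumes noise: "norm (yd - y) \<le> d"
    and discrepancy: "\<forall>k<n. (1 + \<eta>) * d \<le> c0 * norm (res_n d yd k)"
  shows "x_n d yd n \<in> ball_2rho \<and> Breg (xi_n d yd n) xbar (x_n d yd n) \<le> \<sigma> * \<rho>\<^sup>2
      \<and> inner (mom_n d yd n) (x_n d yd n - xbar) \<le> gam_n d yd n"
  using discrepancy
proof (induction n)
  case 0
  show ?case unfolding x_n_0 xi_n_0 mom_n_0 gam_n_0 using Breg_xbar_x0 xbar_in_ball_2rho rho_pos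
    by (auto simp: dist_norm norm_minus_commute intro: in_ball_2rho_if_Breg_le[OF xi0_subdiff])
next
  case (Suc n)
  then have IH: "x_n d yd n \<in> ball_2rho" "Breg (xi_n d yd n) xbar (x_n d yd n) \<le> \<sigma> * \<rho>\<^sup>2"
      "inner (mom_n d yd n) (x_n d yd n - xbar) \<le> gam_n d yd n"
    by auto
  have Breg: "Breg (xi_n d yd (Suc n)) xbar (x_n d yd (Suc n)) \<le> \<sigma> * \<rho>\<^sup>2"
    using Breg_Suc_le[OF IH(1) noise IH(3)] Suc.prems IH(2) by force
  then have "x_n d yd (Suc n) \<in> ball_2rho"
    unfolding x_n_def by (rule in_ball_2rho_if_Breg_le[OF grad_conj_subdiff])
  then show ?case using Breg mom_inner_le_gam_Suc[OF IH(1) noise IH(3)] by blast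
qed

lemma exact_iterates_near_solution:
  "x_n 0 y n \<in> ball_2rho \<and> inner (mom_n 0 y n) (x_n 0 y n - xbar) \<le> gam_n 0 y n"
  using iterates_near_solution[of y 0 n] c0_pos by simp

text \<open>A vanishing momentum in the exact iteration forces \<open>\<gamma>\<^sub>n = 0\<close>, so that the momentum coefficient,
  which jumps at \<open>m = 0\<close>, only enters the limit through products that vanish anyway.\<close>

lemma exact_gam_zero_if_mom_zero:
  assumes mom0: "mom_n 0 y n = 0"
  shows "gam_n 0 y n = 0"
proof (cases n)
  case (Suc k)
  let ?r = "res_n 0 y k" and ?g = "grad_n 0 y k" and ?\<alpha> = "alpha_n 0 y k"
    and ?\<beta> = "beta_n 0 y k" and ?m = "mom_n 0 y k" and ?\<gamma> = "gam_n 0 y k" and ?x = "x_n 0 y k"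
  have near: "?x \<in> ball_2rho" "inner ?m (?x - xbar) \<le> ?\<gamma>" using exact_iterates_near_solution by auto
  have balance: "?\<alpha> *\<^sub>R ?g = ?\<beta> *\<^sub>R ?m" using mom0 mom_n_Suc[of 0 y k] Suc by simp
  have gam: "gam_n 0 y n = ?\<beta> * ?\<gamma> - (1 - \<eta>) * ?\<alpha> * (norm ?r)\<^sup>2"
    using gam_n_Suc[of 0 y k] mom0 Suc by simp
  have "(1 - \<eta>) * ?\<alpha> * (norm ?r)\<^sup>2 \<le> ?\<alpha> * inner ?g (?x - xbar)"
    using mult_left_mono[OF residual_inner_lower[OF near(1), of y 0] alpha_n_nonneg[of 0 y k]]
    unfolding grad_n_def res_n_def by (simp add: algebra_simps)
  also have "\<dots> = ?\<beta> * inner ?m (?x - xbar)"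
    using arg_cong[OF balance, of "\<lambda>v. inner v (?x - xbar)"] by simp
  also have "\<dots> \<le> ?\<beta> * ?\<gamma>" using near(2) beta_n_nonneg by (rule mult_left_mono)
  finally have lower: "(1 - \<eta>) * ?\<alpha> * (norm ?r)\<^sup>2 \<le> ?\<beta> * ?\<gamma>" .
  have upper: "?\<beta> * ?\<gamma> \<le> 0"
  proof (cases "?\<beta> > 0")
    case True
    have "?\<beta> * (norm ?m)\<^sup>2 \<le> ?\<alpha> * inner ?g ?m - 2 * \<sigma> * ?\<gamma>"
      using momentum_coeff_pos_imp(2) True unfolding beta_n_def by blast
    moreover have "?\<alpha> * inner ?g ?m = ?\<beta> * (norm ?m)\<^sup>2"
      using arg_cong[OF balance, of "\<lambda>v. inner v ?m"] by (simp add: power2_norm_eq_inner)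
    ultimately have "?\<gamma> \<le> 0" using sigma_pos by (simp add: mult_le_0_iff)
    then show ?thesis using True by (simp add: mult_le_0_iff)
  qed (use beta_n_nonneg[of 0 y k] in simp)
  have "0 \<le> (1 - \<eta>) * ?\<alpha> * (norm ?r)\<^sup>2" using alpha_n_nonneg eta by simp
  then show ?thesis using gam lower upper by linarith
qed (simp add: gam_n_0)

end

section \<open>Stability with respect to the noise level\<close>

abbreviation noisy :: "(nat \<Rightarrow> real) \<Rightarrow> (nat \<Rightarrow> 'b) \<Rightarrow> (real \<Rightarrow> 'b \<Rightarrow> nat \<Rightarrow> 'c) \<Rightarrow> nat \<Rightarrow> nat \<Rightarrow> 'c" where
  "noisy dl ydl f n \<equiv> \<lambda>l. f (dl l) (ydl l) n"

context heavy_ball_setting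
begin

context
  fixes dl :: "nat \<Rightarrow> real" and ydl :: "nat \<Rightarrow> 'b"
  assumes dl_tendsto: "dl \<longlonglongrightarrow> 0" and ydl_noise: "\<And>l. norm (ydl l - y) \<le> dl l"
begin

lemma ydl_tendsto: "ydl \<longlonglongrightarrow> y"
proof (rule tendsto_norm_diff_bound[where g = dl])
  show "eventually (\<lambda>l. norm (ydl l - y) \<le> dl l) sequentially" using ydl_noise by simp
qed (rule dl_tendsto)

lemma x_n_tendsto: "noisy dl ydl xi_n n \<longlonglongrightarrow> xi_n 0 y n \<Longrightarrow> noisy dl ydl x_n n \<longlonglongrightarrow> x_n 0 y n"
  unfolding x_n_def by (rule grad_conj_tendsto)

lemma res_n_tendsto:
  assumes xi: "noisy dl ydl xi_n n \<longlonglongrightarrow> xi_n 0 y n"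
    and ball: "eventually (\<lambda>l. noisy dl ydl x_n n l \<in> ball_2rho) sequentially"
  shows "noisy dl ydl res_n n \<longlonglongrightarrow> res_n 0 y n"
proof -
  have x0: "x_n 0 y n \<in> ball_2rho" using exact_iterates_near_solution by blast
  have "(\<lambda>l. F (noisy dl ydl x_n n l)) \<longlonglongrightarrow> F (x_n 0 y n)"
  proof (rule tendsto_norm_diff_bound)
    show "eventually (\<lambda>l. norm (F (noisy dl ydl x_n n l) - F (x_n 0 y n))
        \<le> Lc / (1 - \<eta>) * norm (noisy dl ydl x_n n l - x_n 0 y n)) sequentially"
      using ball by eventually_elim (rule F_lipschitz_ball_2rho[OF _ x0])
    show "(\<lambda>l. Lc / (1 - \<eta>) * norm (noisy dl ydl x_n n l - x_n 0 y n)) \<longlonglongrightarrow> 0"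
      using tendsto_mult_right_zero[OF tendsto_norm_diff_zero[OF x_n_tendsto[OF xi]]] .
  qed
  then show ?thesis
    unfolding res_n_def using ydl_tendsto by (rule tendsto_diff)
qed

lemma grad_n_tendsto:
  assumes xi: "noisy dl ydl xi_n n \<longlonglongrightarrow> xi_n 0 y n"
    and ball: "eventually (\<lambda>l. noisy dl ydl x_n n l \<in> ball_2rho) sequentially"
  shows "noisy dl ydl grad_n n \<longlonglongrightarrow> grad_n 0 y n"
proof (rule tendsto_norm_diff_bound)
  let ?x = "x_n 0 y n" and ?r = "res_n 0 y n"
  have x0: "?x \<in> ball_2rho" using exact_iterates_near_solution by blast
  show "eventually (\<lambda>l. norm (noisy dl ydl grad_n n l - grad_n 0 y n)
      \<le> Lc * norm (noisy dl ydl res_n n l - ?r) + norm (L (noisy dl ydl x_n n l) - L ?x) * norm ?r) sequentially"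
    using ball
  proof eventually_elim
    case (elim l)
    let ?xl = "noisy dl ydl x_n n l" and ?rl = "noisy dl ydl res_n n l"
    have "noisy dl ydl grad_n n l - grad_n 0 y n = Ladj ?xl (?rl - ?r) + (Ladj ?xl ?r - Ladj ?x ?r)"
      unfolding grad_n_def adjoint_diff[OF Ladj_adj] by simp
    then have "norm (noisy dl ydl grad_n n l - grad_n 0 y n) \<le> norm (Ladj ?xl (?rl - ?r)) + norm (Ladj ?xl ?r - Ladj ?x ?r)"
      by (simp only: norm_triangle_ineq)
    then show ?case
      using Ladj_norm_le[OF elim, of "?rl - ?r"] adjoint_diff_norm_le[OF Ladj_adj[of ?xl] Ladj_adj[of ?x], of ?r]
      by linarith
  qed
  have L: "(\<lambda>l. L (noisy dl ydl x_n n l)) \<longlonglongrightarrow> L ?x"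
    using continuous_on_tendsto_compose[OF L_cont x_n_tendsto[OF xi] x0 ball] by (simp add: o_def)
  show "(\<lambda>l. Lc * norm (noisy dl ydl res_n n l - ?r) + norm (L (noisy dl ydl x_n n l) - L ?x) * norm ?r) \<longlonglongrightarrow> 0"
    using tendsto_add_zero[OF tendsto_mult_right_zero[OF tendsto_norm_diff_zero[OF res_n_tendsto[OF xi ball]]]
        tendsto_mult_left_zero[OF tendsto_norm_diff_zero[OF L]]] .
qed

text \<open>The step size may jump where the exact residual vanishes; there the products in which it
  enters vanish, since the step sizes stay bounded.\<close>

lemma alpha_products_tendsto:
  assumes res: "noisy dl ydl res_n n \<longlonglongrightarrow> res_n 0 y n" and grad: "noisy dl ydl grad_n n \<longlonglongrightarrow> grad_n 0 y n"
  shows "(\<lambda>l. noisy dl ydl alpha_n n l *\<^sub>R noisy dl ydl grad_n n l) \<longlonglongrightarrow> alpha_n 0 y n *\<^sub>R grad_n 0 y n" (is ?AG)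
    and "(\<lambda>l. noisy dl ydl alpha_n n l * (norm (noisy dl ydl res_n n l))\<^sup>2) \<longlonglongrightarrow> alpha_n 0 y n * (norm (res_n 0 y n))\<^sup>2" (is ?AR)
proof -
  have "?AG \<and> ?AR"
  proof (cases "res_n 0 y n = 0")
    case True
    then have "grad_n 0 y n = 0" unfolding grad_n_def using adjoint_zero[OF Ladj_adj] by simp
    then have ?AG
      using bounded_scaleR_tendsto_zero[where a = "noisy dl ydl alpha_n n", OF alpha_n_abs_le LIM_zero[OF grad]] by simp
    have res_sq: "(\<lambda>l. (norm (noisy dl ydl res_n n l))\<^sup>2) \<longlonglongrightarrow> 0"
      using tendsto_power[OF tendsto_norm[OF res], of 2] True by simp
    have ?AR
      using bounded_scaleR_tendsto_zero[where a = "noisy dl ydl alpha_n n", OF alpha_n_abs_le res_sq] True by simp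
    with \<open>?AG\<close> show ?thesis ..
  next
    case False
    have "grad_n 0 y n \<noteq> 0"
    proof
      assume "grad_n 0 y n = 0"
      then have "(1 - \<eta>) * (norm (res_n 0 y n))\<^sup>2 \<le> 0"
        using residual_inner_lower[of "x_n 0 y n" y 0] exact_iterates_near_solution
        unfolding grad_n_def res_n_def by simp
      then show False using False eta by (simp add: mult_le_0_iff)
    qed
    then have alpha: "noisy dl ydl alpha_n n \<longlonglongrightarrow> alpha_n 0 y n"
      unfolding alpha_n_def using stepsize_tendsto[OF res False grad] by simp
    show ?thesis
      using tendsto_scaleR[OF alpha grad] tendsto_mult[OF alpha tendsto_power[OF tendsto_norm[OF res]]] ..
  qed
  then show ?AG ?AR by blast+
qed

lemma alpha_noise_tendsto:
  assumes res: "noisy dl ydl res_n n \<longlonglongrightarrow> res_n 0 y n"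
  shows "(\<lambda>l. noisy dl ydl alpha_n n l * dl l * norm (noisy dl ydl res_n n l)) \<longlonglongrightarrow> 0"
proof -
  have "(\<lambda>l. dl l * norm (noisy dl ydl res_n n l)) \<longlonglongrightarrow> 0 * norm (res_n 0 y n)"
    using dl_tendsto tendsto_norm[OF res] by (rule tendsto_mult)
  then have noise: "(\<lambda>l. dl l * norm (noisy dl ydl res_n n l)) \<longlonglongrightarrow> 0" by simp
  have "(\<lambda>l. noisy dl ydl alpha_n n l * (dl l * norm (noisy dl ydl res_n n l))) \<longlonglongrightarrow> 0"
    using bounded_scaleR_tendsto_zero[where a = "noisy dl ydl alpha_n n", OF alpha_n_abs_le noise] by simp
  then show ?thesis by (simp add: mult.assoc)
qed

lemma beta_products_tendsto:
  assumes xi: "noisy dl ydl xi_n n \<longlonglongrightarrow> xi_n 0 y n" and xi_prev: "noisy dl ydl xi_prev n \<longlonglongrightarrow> xi_prev 0 y n"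
    and gam: "noisy dl ydl gam_n n \<longlonglongrightarrow> gam_n 0 y n"
    and alpha_grad: "(\<lambda>l. noisy dl ydl alpha_n n l *\<^sub>R noisy dl ydl grad_n n l) \<longlonglongrightarrow> alpha_n 0 y n *\<^sub>R grad_n 0 y n"
  shows "(\<lambda>l. noisy dl ydl beta_n n l *\<^sub>R noisy dl ydl mom_n n l) \<longlonglongrightarrow> beta_n 0 y n *\<^sub>R mom_n 0 y n" (is ?BM)
    and "(\<lambda>l. noisy dl ydl beta_n n l * noisy dl ydl gam_n n l) \<longlonglongrightarrow> beta_n 0 y n * gam_n 0 y n" (is ?BG)
proof -
  have mom: "noisy dl ydl mom_n n \<longlonglongrightarrow> mom_n 0 y n"
    unfolding mom_n_def using xi xi_prev by (rule tendsto_diff)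
  have "?BM \<and> ?BG"
  proof (cases "mom_n 0 y n = 0")
    case True
    then have "gam_n 0 y n = 0" by (rule exact_gam_zero_if_mom_zero)
    then have ?BG
      using bounded_scaleR_tendsto_zero[where a = "noisy dl ydl beta_n n", OF beta_n_abs_le LIM_zero[OF gam]] by simp
    moreover have ?BM
      using bounded_scaleR_tendsto_zero[where a = "noisy dl ydl beta_n n", OF beta_n_abs_le LIM_zero[OF mom]] True by simp
    ultimately show ?thesis by blast
  next
    case False
    have "noisy dl ydl beta_n n \<longlonglongrightarrow> beta_n 0 y n"
      unfolding beta_n_def using momentum_coeff_tendsto[OF alpha_grad mom False gam] .
    then show ?thesis using tendsto_scaleR[OF _ mom] tendsto_mult[OF _ gam] by blast
  qed
  then show ?BM ?BG by blast+
qed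

lemma state_Suc_tendsto:
  assumes xi: "noisy dl ydl xi_n n \<longlonglongrightarrow> xi_n 0 y n" and xi_prev: "noisy dl ydl xi_prev n \<longlonglongrightarrow> xi_prev 0 y n"
    and gam: "noisy dl ydl gam_n n \<longlonglongrightarrow> gam_n 0 y n"
    and ball: "eventually (\<lambda>l. noisy dl ydl x_n n l \<in> ball_2rho) sequentially"
  shows "noisy dl ydl xi_n (Suc n) \<longlonglongrightarrow> xi_n 0 y (Suc n)"
    and "noisy dl ydl xi_prev (Suc n) \<longlonglongrightarrow> xi_prev 0 y (Suc n)"
    and "noisy dl ydl gam_n (Suc n) \<longlonglongrightarrow> gam_n 0 y (Suc n)"
proof -
  note res = res_n_tendsto[OF xi ball] and grad = grad_n_tendsto[OF xi ball]
  note alpha = alpha_products_tendsto[OF res grad]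
  note beta = beta_products_tendsto[OF xi xi_prev gam alpha(1)]
  show xi': "noisy dl ydl xi_n (Suc n) \<longlonglongrightarrow> xi_n 0 y (Suc n)"
    unfolding xi_n_Suc by (intro tendsto_add tendsto_diff xi alpha(1) beta(1))
  show "noisy dl ydl xi_prev (Suc n) \<longlonglongrightarrow> xi_prev 0 y (Suc n)"
    unfolding xi_prev_Suc by (rule xi)
  have mom': "noisy dl ydl mom_n (Suc n) \<longlonglongrightarrow> mom_n 0 y (Suc n)"
    unfolding mom_n_def[of _ _ "Suc n"] xi_prev_Suc using xi' xi by (rule tendsto_diff)
  have "(\<lambda>l. inner (noisy dl ydl mom_n (Suc n) l) (noisy dl ydl x_n (Suc n) l - noisy dl ydl x_n n l)
        - (1 - \<eta>) * (noisy dl ydl alpha_n n l * (norm (noisy dl ydl res_n n l))\<^sup>2)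
        + (1 + \<eta>) * (noisy dl ydl alpha_n n l * dl l * norm (noisy dl ydl res_n n l))
        + noisy dl ydl beta_n n l * noisy dl ydl gam_n n l)
      \<longlonglongrightarrow> inner (mom_n 0 y (Suc n)) (x_n 0 y (Suc n) - x_n 0 y n)
        - (1 - \<eta>) * (alpha_n 0 y n * (norm (res_n 0 y n))\<^sup>2) + (1 + \<eta>) * 0 + beta_n 0 y n * gam_n 0 y n"
    by (intro tendsto_add tendsto_diff tendsto_mult tendsto_inner tendsto_const mom' x_n_tendsto xi xi' alpha(2)
        alpha_noise_tendsto[OF res] beta(2))
  then show "noisy dl ydl gam_n (Suc n) \<longlonglongrightarrow> gam_n 0 y (Suc n)"
    by (simp add: gam_n_Suc mult.assoc)
qed

lemma iterates_tendsto:
  assumes discrepancy: "eventually (\<lambda>l. \<forall>k<N. (1 + \<eta>) * dl l \<le> c0 * norm (res_n (dl l) (ydl l) k)) sequentially"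
    and "n \<le> N"
  shows "noisy dl ydl xi_n n \<longlonglongrightarrow> xi_n 0 y n \<and> noisy dl ydl xi_prev n \<longlonglongrightarrow> xi_prev 0 y n
      \<and> noisy dl ydl gam_n n \<longlonglongrightarrow> gam_n 0 y n"
  using \<open>n \<le> N\<close>
proof (induction n)
  case 0
  show ?case by (simp add: xi_n_0 xi_prev_0 gam_n_0)
next
  case (Suc n)
  have "eventually (\<lambda>l. noisy dl ydl x_n n l \<in> ball_2rho) sequentially"
    using discrepancy
  proof eventually_elim
    case (elim l)
    then show ?case using iterates_near_solution[OF ydl_noise] Suc.prems by auto
  qed
  then show ?case using state_Suc_tendsto Suc by simp
qed

end

end

lemma eventually_less_of_le_liminf:
  fixes S :: "nat \<Rightarrow> enat"
  assumes "enat N \<le> liminf S"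
  shows "eventually (\<lambda>l. \<forall>k<N. enat k < S l) sequentially"
proof -
  have "eventually (\<lambda>l. enat k < S l) sequentially" if "k < N" for k
    using le_Liminf_iff[THEN iffD1, OF assms, rule_format, of "enat k"] that by simp
  then have "eventually (\<lambda>l. \<forall>k\<in>{..<N}. enat k < S l) sequentially"
    by (intro eventually_ball_finite) auto
  then show ?thesis by (rule eventually_mono) simp
qed

context heavy_ball_setting
begin

lemma xi_seq_eq: "xi_seq R F Ladj \<eta> \<sigma> Lc adaptive \<mu>0 \<mu>1 \<beta> d yd \<xi>0 n = xi_n d yd n"
  unfolding xi_seq_def xi_n_def state_def ..

lemma x_seq_eq: "x_seq R F Ladj \<eta> \<sigma> Lc adaptive \<mu>0 \<mu>1 \<beta> d yd \<xi>0 n = x_n d yd n"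
  unfolding x_seq_def x_n_def xi_seq_eq ..

lemma discrepancy_before_stop:
  assumes d: "d > 0" and k: "enat k < stop_index R F Ladj \<eta> \<sigma> Lc adaptive \<mu>0 \<mu>1 \<beta> \<tau> d yd \<xi>0"
  shows "(1 + \<eta>) * d \<le> c0 * norm (res_n d yd k)"
proof -
  let ?P = "\<lambda>n. norm (F (x_seq R F Ladj \<eta> \<sigma> Lc adaptive \<mu>0 \<mu>1 \<beta> d yd \<xi>0 n) - yd) \<le> \<tau> * d"
  have "\<not> ?P k"
  proof
    assume "?P k"
    then have "\<exists>n. ?P n" ..
    then have "stop_index R F Ladj \<eta> \<sigma> Lc adaptive \<mu>0 \<mu>1 \<beta> \<tau> d yd \<xi>0 = enat (LEAST n. ?P n)"
      unfolding stop_index_def Let_def by (rule if_P)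
    with k have "k < (LEAST n. ?P n)" by simp
    then show False using not_less_Least \<open>?P k\<close> by blast
  qed
  then have above: "\<tau> * d < norm (res_n d yd k)" unfolding res_n_def x_seq_eq by simp
  have "1 + \<eta> < c0 * \<tau>" using c0_gt tau by (simp add: divide_less_eq)
  then have "(1 + \<eta>) * d \<le> c0 * \<tau> * d" using d by simp
  also have "\<dots> \<le> c0 * norm (res_n d yd k)" using above c0_pos by (simp add: mult.assoc)
  finally show ?thesis .
qed

end

text \<open>Weak closedness of \<open>F\<close> and the domain assumptions only matter for the convergence of the
  exact iteration.\<close>

theorem mainTheorem8:
  fixes R :: "'a::{real_inner,complete_space} \<Rightarrow> ereal"
    and F :: "'a \<Rightarrow> 'b::{real_inner,complete_space}"
    and domF :: "'a set"
    and L :: "'a \<Rightarrow> ('a \<Rightarrow>\<^sub>L 'b)"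
    and Ladj :: "'a \<Rightarrow> 'b \<Rightarrow> 'a"
    and y :: 'b and x0 xbar \<xi>0 :: 'a
    and \<sigma> \<rho> \<eta> Lc \<tau> \<mu>0 \<mu>1 \<beta> :: real
    and adaptive :: bool
    and \<delta> :: "nat \<Rightarrow> real" and yd :: "nat \<Rightarrow> 'b"
    and nhat :: nat
  assumes R_proper: "proper_fun R" and R_lsc: "lsc_fun R"
    and sigma_pos: "\<sigma> > 0" and R_sc: "strongly_convex_fun R \<sigma>"
    and rho_pos: "\<rho> > 0" and xi0_sub: "\<xi>0 \<in> subdiff R x0"
    and ball_dom: "cball x0 (2 * \<rho>) \<subseteq> domF"
    and xbar_dom: "xbar \<in> domF" and xbar_sol: "F xbar = y"
    and xbar_breg: "bregman R \<xi>0 xbar x0 \<le> ereal (\<sigma> * \<rho>\<^sup>2)"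
    and F_weakly_closed: "\<And>X x v. (\<forall>n. X n \<in> domF) \<Longrightarrow> weak_conv X x \<Longrightarrow>
              ((\<lambda>n. F (X n)) \<longlongrightarrow> v) sequentially \<Longrightarrow> x \<in> domF \<and> F x = v"
    and L_cont: "continuous_on (cball x0 (2 * \<rho>)) L"
    and Ladj_adj: "\<And>x v w. inner (blinfun_apply (L x) v) w = inner v (Ladj x w)"
    and eta: "0 \<le> \<eta>" "\<eta> < 1"
    and tcc: "\<And>x x'. x \<in> cball x0 (2 * \<rho>) \<Longrightarrow> x' \<in> cball x0 (2 * \<rho>) \<Longrightarrow>
              norm (F x - F x' - blinfun_apply (L x') (x - x')) \<le> \<eta> * norm (F x - F x')"
    and Lc_pos: "Lc > 0" and L_bound: "\<And>x. x \<in> cball x0 (2 * \<rho>) \<Longrightarrow> norm (L x) \<le> Lc"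
    and tau: "\<tau> > 1" and mu0: "\<mu>0 > 0" and mu1: "\<mu>1 > 0" and beta: "\<beta> > 0"
    and cond: "1 - (1 + \<eta>) / \<tau> - \<eta> - \<mu>0 / (4 * \<sigma>) > 0"
    and delta_pos: "\<And>l. \<delta> l > 0" and delta_lim: "\<delta> \<longlonglongrightarrow> 0"
    and noise: "\<And>l. norm (yd l - y) \<le> \<delta> l"
    and nhat: "enat nhat \<le> liminf (\<lambda>l. stop_index R F Ladj \<eta> \<sigma> Lc adaptive \<mu>0 \<mu>1 \<beta> \<tau> (\<delta> l) (yd l) \<xi>0)"
  shows "\<forall>n\<le>nhat.
     (\<lambda>l. xi_seq R F Ladj \<eta> \<sigma> Lc adaptive \<mu>0 \<mu>1 \<beta> (\<delta> l) (yd l) \<xi>0 n)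
        \<longlonglongrightarrow> xi_seq R F Ladj \<eta> \<sigma> Lc adaptive \<mu>0 \<mu>1 \<beta> 0 y \<xi>0 n
   \<and> (\<lambda>l. x_seq R F Ladj \<eta> \<sigma> Lc adaptive \<mu>0 \<mu>1 \<beta> (\<delta> l) (yd l) \<xi>0 n)
        \<longlonglongrightarrow> x_seq R F Ladj \<eta> \<sigma> Lc adaptive \<mu>0 \<mu>1 \<beta> 0 y \<xi>0 n"
proof -
  interpret heavy_ball_setting R \<sigma> x0 \<xi>0 F L Ladj \<eta> Lc \<mu>0 \<mu>1 \<beta> \<tau> \<rho> adaptive y xbar
    by unfold_locales (use assms in auto)
  have discrepancy: "eventually (\<lambda>l. \<forall>k<nhat. (1 + \<eta>) * \<delta> l \<le> c0 * norm (res_n (\<delta> l) (yd l) k)) sequentially"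
    using eventually_less_of_le_liminf[OF nhat]
    by (rule eventually_mono) (simp add: discrepancy_before_stop delta_pos)
  have xi: "noisy \<delta> yd xi_n n \<longlonglongrightarrow> xi_n 0 y n" if "n \<le> nhat" for n
    using iterates_tendsto[OF delta_lim noise discrepancy that] by (rule conjunct1)
  show ?thesis
    unfolding xi_seq_eq x_seq_eq x_n_def using xi grad_conj_tendsto by simp
qed

end
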